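(* Let $G$ be the dihedral group of order $2n$ with $n=2m$ even, and let $C$ be its cyclic subgroup of order $n$. Let $S\subseteq G\setminus\{e\}$ with $S=S^{-1}$ be such that $\Gamma=\mathrm{Cay}(G,S)$ is distance-regular with intersection array $\{k,k-1,k-\mu;1,\mu,k\}$ where $\mu<k-1$, and let $H$ be the part of this bipartite graph containing the identity element. If $H\neq C$, then, with $k_1=|S\cap C|$, $k_2=k-k_1$, the Cayley graph $\Gamma_C=\mathrm{Cay}(C,S\cap C)$ is the incidence graph of a symmetric partial geometric design with parameters $(m,k_1,\alpha,\beta)$ and has exactly the distinct eigenvalues $k_1,-k_1,\sqrt{k-\mu},-\sqrt{k-\mu},0$, where $\alpha=\frac{\mu(2k_1-k_2)}{2}$ and $2k_1-1+\beta-\alpha=(k_1-k_2)^2=k-\mu$.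
   Context: For a finite group $G$ with identity $e$ and a subset $S\subseteq G\setminus\{e\}$ with $S=S^{-1}$, the Cayley graph $\mathrm{Cay}(G,S)$ has vertex set $G$, two vertices $a,b$ being adjacent iff $ab^{-1}\in S$. A connected graph of diameter $d$ is distance-regular with intersection array $\{b_0,\dots,b_{d-1};c_1,\dots,c_d\}$ if for all vertices $x,y$ at distance $i$, the number of neighbours of $x$ at distance $i+1$ (resp. $i-1$) from $y$ is $b_i$ (resp. $c_i$). Eigenvalues of a graph are those of its adjacency matrix. A symmetric partial geometric design with parameters $(v,k,\alpha,\beta)$ is an incidence structure with $v$ points and $v$ blocks, each block containing $k$ points and each point in $k$ blocks, such that for each point-block pair $(p,B)$ the number of incident point-block pairs $(p',B')$ with $p'\neq p$, $B'\neq B$, $p'\in B$ and $p\in B'$ equals $\beta$ if $p\in B$ and $\alpha$ if $p\notin B$. Its incidence graph is the bipartite graph on points and blocks with incidence as adjacency. *)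

theory Defs
  imports Complex_Main "HOL-Algebra.Group"
begin

text \<open>Element (a, x) stands for r^a t^x, with r a rotation of order n and t a reflection
  (t r t = r^-1). Hence (a,x)(b,y) = (a + (-1)^x b mod n, x xor y).\<close>

definition dihedral_mult :: "nat \<Rightarrow> nat \<times> bool \<Rightarrow> nat \<times> bool \<Rightarrow> nat \<times> bool" where
  "dihedral_mult n g h =
     ((if snd g then fst g + n - fst h else fst g + fst h) mod n, snd g \<noteq> snd h)"

definition dihedral_group :: "nat \<Rightarrow> (nat \<times> bool) monoid" where
  "dihedral_group n = \<lparr> carrier = {0..<n} \<times> UNIV, mult = dihedral_mult n, one = (0, False) \<rparr>"

definition dihedral_rotations :: "nat \<Rightarrow> (nat \<times> bool) set" where
  "dihedral_rotations n = {0..<n} \<times> {False}"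

definition cayley_adj :: "('a, 'b) monoid_scheme \<Rightarrow> 'a set \<Rightarrow> 'a \<Rightarrow> 'a \<Rightarrow> bool" where
  "cayley_adj G S a b \<longleftrightarrow> a \<otimes>\<^bsub>G\<^esub> inv\<^bsub>G\<^esub> b \<in> S"

definition walk_of_length :: "'a set \<Rightarrow> ('a \<Rightarrow> 'a \<Rightarrow> bool) \<Rightarrow> nat \<Rightarrow> 'a \<Rightarrow> 'a \<Rightarrow> bool" where
  "walk_of_length V adj l x y \<longleftrightarrow>
     (\<exists>xs. length xs = l + 1 \<and> set xs \<subseteq> V \<and> hd xs = x \<and> last xs = y \<and>
           (\<forall>i < l. adj (xs ! i) (xs ! (i + 1))))"

definition graph_connected :: "'a set \<Rightarrow> ('a \<Rightarrow> 'a \<Rightarrow> bool) \<Rightarrow> bool" where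
  "graph_connected V adj \<longleftrightarrow> (\<forall>x\<in>V. \<forall>y\<in>V. \<exists>l. walk_of_length V adj l x y)"

definition graph_dist :: "'a set \<Rightarrow> ('a \<Rightarrow> 'a \<Rightarrow> bool) \<Rightarrow> 'a \<Rightarrow> 'a \<Rightarrow> nat" where
  "graph_dist V adj x y = (LEAST l. walk_of_length V adj l x y)"

definition graph_diameter_is :: "'a set \<Rightarrow> ('a \<Rightarrow> 'a \<Rightarrow> bool) \<Rightarrow> nat \<Rightarrow> bool" where
  "graph_diameter_is V adj d \<longleftrightarrow>
     (\<forall>x\<in>V. \<forall>y\<in>V. graph_dist V adj x y \<le> d) \<and> (\<exists>x\<in>V. \<exists>y\<in>V. graph_dist V adj x y = d)"

text \<open>Distance-regular with intersection array {b_0,...,b_(d-1); c_1,...,c_d}: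
  bs = [b_0,...,b_(d-1)], cs = [c_1,...,c_d] (so c_i = cs ! (i-1)).\<close>
definition distance_regular :: "'a set \<Rightarrow> ('a \<Rightarrow> 'a \<Rightarrow> bool) \<Rightarrow> nat list \<Rightarrow> nat list \<Rightarrow> bool" where
  "distance_regular V adj bs cs \<longleftrightarrow>
     finite V \<and> graph_connected V adj \<and> length cs = length bs \<and>
     graph_diameter_is V adj (length bs) \<and>
     (\<forall>x\<in>V. \<forall>y\<in>V.
        (graph_dist V adj x y < length bs \<longrightarrow>
           card {z\<in>V. adj x z \<and> graph_dist V adj z y = graph_dist V adj x y + 1}
             = bs ! graph_dist V adj x y) \<and>
        (1 \<le> graph_dist V adj x y \<longrightarrow>
           card {z\<in>V. adj x z \<and> graph_dist V adj z y = graph_dist V adj x y - 1}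
             = cs ! (graph_dist V adj x y - 1)))"

definition graph_eigenvalue :: "'a set \<Rightarrow> ('a \<Rightarrow> 'a \<Rightarrow> bool) \<Rightarrow> real \<Rightarrow> bool" where
  "graph_eigenvalue V adj lam \<longleftrightarrow>
     (\<exists>f :: 'a \<Rightarrow> real. (\<exists>x\<in>V. f x \<noteq> 0) \<and>
        (\<forall>x\<in>V. (\<Sum>y\<in>{y\<in>V. adj x y}. f y) = lam * f x))"

text \<open>The graph (V, adj) is the incidence graph of a symmetric partial geometric design
  with parameters (v,k,alpha,beta): V splits into a point class P and a block class Bl,
  incidence being adjacency.\<close>
definition spgd_incidence_graph ::
  "'a set \<Rightarrow> ('a \<Rightarrow> 'a \<Rightarrow> bool) \<Rightarrow> nat \<Rightarrow> nat \<Rightarrow> nat \<Rightarrow> nat \<Rightarrow> bool" where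
  "spgd_incidence_graph V adj v k \<alpha> \<beta> \<longleftrightarrow>
     (\<exists>P Bl. P \<inter> Bl = {} \<and> P \<union> Bl = V \<and> card P = v \<and> card Bl = v \<and> finite V \<and>
        (\<forall>x\<in>V. \<forall>y\<in>V. adj x y \<longleftrightarrow> (x \<in> P \<and> y \<in> Bl \<and> adj x y) \<or> (x \<in> Bl \<and> y \<in> P \<and> adj y x)) \<and>
        (\<forall>B\<in>Bl. card {p\<in>P. adj p B} = k) \<and>
        (\<forall>p\<in>P. card {B\<in>Bl. adj p B} = k) \<and>
        (\<forall>p\<in>P. \<forall>B\<in>Bl.
           card {(p', B'). p' \<in> P \<and> B' \<in> Bl \<and> adj p' B' \<and> p' \<noteq> p \<and> B' \<noteq> B \<and>
                           adj p' B \<and> adj p B'}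
             = (if adj p B then \<beta> else \<alpha>)))"

end

theory Submission
  imports Defs
begin

(* Since b_i + c_i = k for all i, the graph is bipartite, and two vertices have k, \<mu> or 0 common
   neighbours according as they are equal, of the same colour, or of different colours.  Right
   translations are automorphisms, so the colour is a homomorphism to Z/2; H \<noteq> C forces the rotation
   r to change colour, hence each coset of C meets each colour class in m elements.  Counting the
   common neighbours of the identity with the rotations, resp. the reflections, gives
   k1^2 + k2^2 = k + \<mu>(m - 1) and 2 k1 k2 = \<mu> m, whence (k1 - k2)^2 = k - \<mu>.

   The key computation counts walks of length 3 inside C between vertices p, B of different
   colours; splitting the middle vertex by coset (the reflection part is matched bijectively with the
   rotation part) gives (k - \<mu>)[p ~ B] + \<alpha> with \<alpha> = \<mu>(2 k1 - k2)/2.  Read as a flag count this is the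
   partial geometric design on the two colour classes of C; read as an operator identity it is
   A^3 = (k - \<mu>) A + \<alpha> J', where J' joins the two colour classes, which confines the spectrum.  All
   five eigenvalues occur: k1 and -k1 for the constant and the alternating vector, and
   +-sqrt(k - \<mu>) and 0 for vectors A^2 f +- sqrt(k - \<mu>) A f and A^2 f - (k - \<mu>) f built from
   f = \<delta>_1 - \<delta>_y for a suitable block y. *)

lemma walk_of_length_0_iff: "walk_of_length V adj 0 x y \<longleftrightarrow> x = y \<and> x \<in> V"
proof
  assume "walk_of_length V adj 0 x y"
  then obtain xs where "length xs = 1" "set xs \<subseteq> V" "hd xs = x" "last xs = y"
    unfolding walk_of_length_def by auto
  then show "x = y \<and> x \<in> V"
    by (cases xs) auto
qed (auto simp: walk_of_length_def intro!: exI[of _ "[x]"])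

lemma walk_of_length_Suc_iff:
  "walk_of_length V adj (Suc l) x y \<longleftrightarrow> x \<in> V \<and> (\<exists>z. adj x z \<and> walk_of_length V adj l z y)"
proof
  assume "walk_of_length V adj (Suc l) x y"
  then obtain xs where xs: "length xs = Suc l + 1" "set xs \<subseteq> V" "hd xs = x" "last xs = y"
     "\<forall>i < Suc l. adj (xs ! i) (xs ! (i + 1))"
    unfolding walk_of_length_def by blast
  then obtain ys where "xs = x # ys" by (cases xs) auto
  with xs have ys: "xs = x # ys" "ys \<noteq> []" by auto
  have "adj x (hd ys)" using xs(5)[rule_format, of 0] ys by (simp add: hd_conv_nth)
  moreover have "walk_of_length V adj l (hd ys) y"
    unfolding walk_of_length_def
  proof (intro exI[of _ ys] conjI allI impI)
    fix i assume "i < l"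
    then show "adj (ys ! i) (ys ! (i + 1))" using xs(5)[rule_format, of "Suc i"] ys by auto
  qed (use xs ys in auto)
  ultimately show "x \<in> V \<and> (\<exists>z. adj x z \<and> walk_of_length V adj l z y)"
    using xs ys by auto
next
  assume "x \<in> V \<and> (\<exists>z. adj x z \<and> walk_of_length V adj l z y)"
  then obtain z ys where x: "x \<in> V" and z: "adj x z" and ys: "length ys = l + 1" "set ys \<subseteq> V"
      "hd ys = z" "last ys = y" "\<forall>i < l. adj (ys ! i) (ys ! (i + 1))"
    unfolding walk_of_length_def by blast
  have "ys \<noteq> []" using ys by auto
  show "walk_of_length V adj (Suc l) x y"
    unfolding walk_of_length_def
  proof (intro exI[of _ "x # ys"] conjI allI impI)
    fix i assume "i < Suc l"
    then show "adj ((x # ys) ! i) ((x # ys) ! (i + 1))"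
      using z ys \<open>ys \<noteq> []\<close> by (cases i) (auto simp: hd_conv_nth)
  qed (use x ys \<open>ys \<noteq> []\<close> in auto)
qed

lemma walk_of_length_in_V: "walk_of_length V adj l x y \<Longrightarrow> x \<in> V \<and> y \<in> V"
  by (induction l arbitrary: x) (auto simp: walk_of_length_0_iff walk_of_length_Suc_iff)

lemma walk_of_length_parity:
  assumes "\<And>a b. a \<in> V \<Longrightarrow> b \<in> V \<Longrightarrow> adj a b \<Longrightarrow> \<phi> a \<noteq> \<phi> b"
  shows "walk_of_length V adj l x y \<Longrightarrow> \<phi> y = (\<phi> x \<noteq> odd l)"
proof (induction l arbitrary: x)
  case (Suc l)
  then obtain z where "x \<in> V" "adj x z" "walk_of_length V adj l z y"
    by (auto simp: walk_of_length_Suc_iff)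
  then show ?case using Suc.IH assms walk_of_length_in_V by fastforce
qed (auto simp: walk_of_length_0_iff)

lemma walk_of_length_map:
  assumes "\<And>a. a \<in> V \<Longrightarrow> f a \<in> V"
    and "\<And>a b. a \<in> V \<Longrightarrow> b \<in> V \<Longrightarrow> adj a b \<Longrightarrow> adj (f a) (f b)"
  shows "walk_of_length V adj l x y \<Longrightarrow> walk_of_length V adj l (f x) (f y)"
proof (induction l arbitrary: x)
  case (Suc l)
  then obtain z where "x \<in> V" "adj x z" "walk_of_length V adj l z y"
    by (auto simp: walk_of_length_Suc_iff)
  then show ?case using Suc.IH assms walk_of_length_in_V unfolding walk_of_length_Suc_iff by metis
qed (use assms in \<open>auto simp: walk_of_length_0_iff\<close>)

lemma card_Un_disjoint_eq_superset:
  assumes "finite N" "A \<subseteq> N" "B \<subseteq> N" "A \<inter> B = {}" "card A + card B = card N"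
  shows "A \<union> B = N"
proof -
  have "card (A \<union> B) = card N" using assms by (metis card_Un_disjoint finite_subset)
  then show ?thesis using assms by (metis card_subset_eq le_sup_iff)
qed

section \<open>Bipartite distance-regular graphs of diameter 3\<close>

locale bipartite_drg3 =
  fixes V :: "'a set" and adj :: "'a \<Rightarrow> 'a \<Rightarrow> bool" and k \<mu> :: nat
  assumes drg: "distance_regular V adj [k, k - 1, k - \<mu>] [1, \<mu>, k]"
    and mu_le_k: "\<mu> \<le> k" and k_pos: "0 < k"
    and adj_sym: "\<And>x y. x \<in> V \<Longrightarrow> y \<in> V \<Longrightarrow> adj x y \<Longrightarrow> adj y x"
    and adj_irrefl: "\<And>x. x \<in> V \<Longrightarrow> \<not> adj x x"
begin

abbreviation gdist :: "'a \<Rightarrow> 'a \<Rightarrow> nat" where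
  "gdist \<equiv> graph_dist V adj"

lemma finite_V: "finite V"
  using drg unfolding distance_regular_def by auto

lemma walk_of_length_dist: "x \<in> V \<Longrightarrow> y \<in> V \<Longrightarrow> walk_of_length V adj (gdist x y) x y"
proof -
  assume "x \<in> V" "y \<in> V"
  then have "\<exists>l. walk_of_length V adj l x y"
    using drg unfolding distance_regular_def graph_connected_def by blast
  then show ?thesis unfolding graph_dist_def by (rule LeastI_ex)
qed

lemma dist_le_walk_length: "walk_of_length V adj l x y \<Longrightarrow> gdist x y \<le> l"
  unfolding graph_dist_def by (rule Least_le)

lemma dist_eq_0_iff: "x \<in> V \<Longrightarrow> y \<in> V \<Longrightarrow> gdist x y = 0 \<longleftrightarrow> x = y"
proof
  assume "x \<in> V" "y \<in> V" "gdist x y = 0"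
  then show "x = y" using walk_of_length_dist[of x y] by (simp add: walk_of_length_0_iff)
next
  assume "x \<in> V" "x = y"
  then have "walk_of_length V adj 0 x y" by (simp add: walk_of_length_0_iff)
  then show "gdist x y = 0" using dist_le_walk_length by fastforce
qed

lemma dist_eq_1_iff: "x \<in> V \<Longrightarrow> y \<in> V \<Longrightarrow> gdist x y = 1 \<longleftrightarrow> adj x y"
proof
  assume "x \<in> V" "y \<in> V" "gdist x y = 1"
  then show "adj x y"
    using walk_of_length_dist[of x y] by (auto simp: walk_of_length_Suc_iff walk_of_length_0_iff)
next
  assume xy: "x \<in> V" "y \<in> V" "adj x y"
  then have "walk_of_length V adj 1 x y" by (auto simp: walk_of_length_Suc_iff walk_of_length_0_iff)
  then have "gdist x y \<le> 1" by (rule dist_le_walk_length)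
  moreover have "x \<noteq> y" using xy adj_irrefl by auto
  ultimately show "gdist x y = 1" using dist_eq_0_iff xy by fastforce
qed

lemma dist_le_3: "x \<in> V \<Longrightarrow> y \<in> V \<Longrightarrow> gdist x y \<le> 3"
  using drg unfolding distance_regular_def graph_diameter_is_def by (auto simp: numeral_3_eq_3)

lemma card_farther_neighbours:
  "x \<in> V \<Longrightarrow> y \<in> V \<Longrightarrow> gdist x y < 3 \<Longrightarrow>
   card {z\<in>V. adj x z \<and> gdist z y = gdist x y + 1} = [k, k - 1, k - \<mu>] ! gdist x y"
  using drg unfolding distance_regular_def by auto

lemma card_nearer_neighbours:
  "x \<in> V \<Longrightarrow> y \<in> V \<Longrightarrow> 1 \<le> gdist x y \<Longrightarrow>
   card {z\<in>V. adj x z \<and> gdist z y + 1 = gdist x y} = [1, \<mu>, k] ! (gdist x y - 1)"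
proof -
  assume xy: "x \<in> V" "y \<in> V" "1 \<le> gdist x y"
  then have "{z\<in>V. adj x z \<and> gdist z y + 1 = gdist x y} = {z\<in>V. adj x z \<and> gdist z y = gdist x y - 1}"
    by auto
  then show ?thesis using drg xy unfolding distance_regular_def by auto
qed

lemma degree: "x \<in> V \<Longrightarrow> card {z\<in>V. adj x z} = k"
proof -
  assume x: "x \<in> V"
  have "{z\<in>V. adj x z} = {z\<in>V. adj x z \<and> gdist z x = gdist x x + 1}"
    using dist_eq_0_iff[OF x x] dist_eq_1_iff x adj_sym by auto
  then show ?thesis using card_farther_neighbours[OF x x] dist_eq_0_iff[OF x x] by simp
qed

text \<open>Since \<open>b\<^sub>i + c\<^sub>i = k\<close> for every \<open>i\<close>, no neighbour of \<open>x\<close> is at the same distance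
  from \<open>y\<close> as \<open>x\<close>: the graph is bipartite.\<close>
lemma neighbours_split:
  assumes x: "x \<in> V" and y: "y \<in> V"
  shows "{z\<in>V. adj x z} = {z\<in>V. adj x z \<and> gdist z y = gdist x y + 1}
           \<union> {z\<in>V. adj x z \<and> gdist z y + 1 = gdist x y}"
    (is "?N = ?A \<union> ?B")
proof -
  have fin: "finite ?N" and card_N: "card ?N = k" using finite_V degree x by auto
  have "gdist x y \<le> 3" using dist_le_3 x y by auto
  then consider "gdist x y = 0" | "gdist x y = 1" | "gdist x y = 2" | "gdist x y = 3" by linarith
  then show ?thesis
  proof cases
    case 1
    then show ?thesis using dist_eq_0_iff[OF x y] dist_eq_1_iff x adj_sym by auto
  next
    case 2
    then have "card ?A = k - 1" "card ?B = 1"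
      using card_farther_neighbours[OF x y] card_nearer_neighbours[OF x y] by simp_all
    then show ?thesis using fin card_N k_pos by (intro card_Un_disjoint_eq_superset[symmetric]) auto
  next
    case 3
    then have "card ?A = k - \<mu>" "card ?B = \<mu>"
      using card_farther_neighbours[OF x y] card_nearer_neighbours[OF x y] by simp_all
    then show ?thesis using fin card_N mu_le_k by (intro card_Un_disjoint_eq_superset[symmetric]) auto
  next
    case 4
    then have "card ?B = k" using card_nearer_neighbours[OF x y] by simp
    then have "?B = ?N" using fin card_N by (intro card_subset_eq) auto
    then show ?thesis by auto
  qed
qed

lemma odd_dist_adj:
  "x \<in> V \<Longrightarrow> y \<in> V \<Longrightarrow> z \<in> V \<Longrightarrow> adj x z \<Longrightarrow> odd (gdist z y) \<longleftrightarrow> even (gdist x y)"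
proof -
  assume "x \<in> V" "y \<in> V" "z \<in> V" "adj x z"
  then have "gdist z y = gdist x y + 1 \<or> gdist z y + 1 = gdist x y"
    using neighbours_split[of x y] by blast
  then show ?thesis by presburger
qed

lemma odd_dist_triangle:
  assumes "e \<in> V" "x \<in> V" "y \<in> V"
  shows "odd (gdist y e) \<longleftrightarrow> odd (gdist x e) \<noteq> odd (gdist x y)"
  using walk_of_length_parity[of V adj "\<lambda>v. odd (gdist v e)", OF _ walk_of_length_dist] odd_dist_adj assms
  by blast

lemma card_common_neighbours:
  assumes e: "e \<in> V" and x: "x \<in> V" and y: "y \<in> V"
  shows "card {z\<in>V. adj x z \<and> adj z y} =
    (if x = y then k else if odd (gdist x e) = odd (gdist y e) then \<mu> else 0)"
proof -
  have common: "{z\<in>V. adj x z \<and> adj z y} = {z\<in>V. adj x z \<and> gdist z y + 1 = 2}"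
    using dist_eq_1_iff y by auto
  have parity: "odd (gdist x e) = odd (gdist y e) \<longleftrightarrow> even (gdist x y)"
    using odd_dist_triangle[OF e x y] by auto
  consider "x = y" | "gdist x y = 2" | "odd (gdist x y)"
    using dist_le_3[OF x y] dist_eq_0_iff[OF x y] by (fastforce simp: numeral_3_eq_3 less_Suc_eq)
  then show ?thesis
  proof cases
    case 1
    then have "{z\<in>V. adj x z \<and> adj z y} = {z\<in>V. adj x z}" using adj_sym x by auto
    then show ?thesis using 1 degree[OF x] by simp
  next
    case 2
    then have "x \<noteq> y" using dist_eq_0_iff[OF x y] by auto
    then show ?thesis using card_nearer_neighbours[OF x y] common parity 2 by simp
  next
    case 3
    have empty: "{z\<in>V. adj x z \<and> adj z y} = {}"
    proof -
      have "gdist z y \<noteq> 1" if "z \<in> V" "adj x z" for z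
        using odd_dist_adj[OF x y that] 3 by auto
      then show ?thesis using dist_eq_1_iff y by auto
    qed
    moreover have "x \<noteq> y" using 3 dist_eq_0_iff[OF x y] by auto
    then show ?thesis using 3 parity by (simp only: empty card.empty) auto
  qed
qed

end

section \<open>The dihedral group\<close>

locale dihedral =
  fixes n :: nat
  assumes n_pos: "0 < n"
begin

abbreviation D :: "(nat \<times> bool) monoid" where
  "D \<equiv> dihedral_group n"

text \<open>\<open>dih a p\<close> is \<open>r\<^sup>a t\<^sup>p\<close>, for an arbitrary integer exponent \<open>a\<close>.\<close>
definition dih :: "int \<Rightarrow> bool \<Rightarrow> nat \<times> bool" where
  "dih a p = (nat (a mod int n), p)"

lemma carrier_dihedral: "carrier D = {0..<n} \<times> UNIV"
  by (simp add: dihedral_group_def)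

lemma one_dihedral: "\<one>\<^bsub>D\<^esub> = dih 0 False"
  by (simp add: dihedral_group_def dih_def)

lemma snd_one_dihedral [simp]: "snd \<one>\<^bsub>D\<^esub> = False"
  by (simp add: one_dihedral dih_def)

lemma dih_in_carrier: "dih a p \<in> carrier D"
  using n_pos by (simp add: carrier_dihedral dih_def nat_less_iff)

lemma dih_fst_snd: "g \<in> carrier D \<Longrightarrow> dih (int (fst g)) (snd g) = g"
  by (cases g) (simp add: carrier_dihedral dih_def)

lemma dih_eq_iff: "dih a p = dih b q \<longleftrightarrow> a mod int n = b mod int n \<and> p = q"
  using n_pos by (auto simp: dih_def eq_nat_nat_iff)

lemma int_fst_dih: "int (fst (dih a p)) = a mod int n"
  using n_pos by (simp add: dih_def)

lemma snd_dih [simp]: "snd (dih a p) = p"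
  by (simp add: dih_def)

lemma dih_fst_add [simp]: "dih (int (fst (dih a p)) + b) q = dih (a + b) q"
  by (simp add: int_fst_dih dih_eq_iff mod_add_left_eq)

lemma mult_dih: "dih a p \<otimes>\<^bsub>D\<^esub> dih b q = dih (if p then a - b else a + b) (p \<noteq> q)"
proof -
  have b_le: "nat (b mod int n) \<le> n"
    using n_pos by (simp add: nat_le_iff order.strict_implies_order)
  have "int (nat (a mod int n) + n - nat (b mod int n)) = a mod int n + int n - b mod int n"
    using b_le n_pos by (simp add: of_nat_diff)
  then have "int ((nat (a mod int n) + n - nat (b mod int n)) mod n)
      = (a mod int n + int n - b mod int n) mod int n"
    by (simp add: zmod_int)
  also have "\<dots> = (a - b) mod int n"
    by (metis mod_add_self2 mod_diff_left_eq mod_diff_right_eq)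
  finally have "int ((nat (a mod int n) + n - nat (b mod int n)) mod n) = (a - b) mod int n" .
  moreover have "int ((nat (a mod int n) + nat (b mod int n)) mod n) = (a + b) mod int n"
    using n_pos by (simp add: zmod_int mod_simps)
  ultimately show ?thesis
    by (simp add: dihedral_group_def dihedral_mult_def dih_def) (metis nat_int)
qed

lemma dih_cases [consumes 1, case_names dih]:
  assumes "g \<in> carrier D" obtains a p where "g = dih a p"
  using dih_fst_snd[OF assms] by metis

lemma group_dihedral: "group D"
proof (rule groupI)
  fix g h assume "g \<in> carrier D" "h \<in> carrier D"
  then show "g \<otimes>\<^bsub>D\<^esub> h \<in> carrier D"
    by (elim dih_cases) (simp add: mult_dih dih_in_carrier)
next
  fix g h l assume "g \<in> carrier D" "h \<in> carrier D" "l \<in> carrier D"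
  then obtain a p b q c r where "g = dih a p" "h = dih b q" "l = dih c r"
    by (metis dih_cases)
  then show "g \<otimes>\<^bsub>D\<^esub> h \<otimes>\<^bsub>D\<^esub> l = g \<otimes>\<^bsub>D\<^esub> (h \<otimes>\<^bsub>D\<^esub> l)"
    by (cases p; cases q) (simp_all add: mult_dih algebra_simps)
next
  fix g assume g: "g \<in> carrier D"
  then show "\<one>\<^bsub>D\<^esub> \<otimes>\<^bsub>D\<^esub> g = g"
    by (elim dih_cases) (simp add: mult_dih one_dihedral)
  from g obtain a p where "g = dih a p" by (rule dih_cases)
  then show "\<exists>h\<in>carrier D. h \<otimes>\<^bsub>D\<^esub> g = \<one>\<^bsub>D\<^esub>"
    by (intro bexI[of _ "dih (if p then a else - a) p"] dih_in_carrier)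
      (simp add: mult_dih one_dihedral)
qed (simp add: one_dihedral dih_in_carrier)

lemma inv_dih: "inv\<^bsub>D\<^esub> (dih a p) = dih (if p then a else - a) p"
  by (rule group.inv_equality[OF group_dihedral]) (simp_all add: mult_dih one_dihedral dih_in_carrier)

lemma snd_mult: "g \<in> carrier D \<Longrightarrow> h \<in> carrier D \<Longrightarrow> snd (g \<otimes>\<^bsub>D\<^esub> h) \<longleftrightarrow> snd g \<noteq> snd h"
  by (elim dih_cases) (simp add: mult_dih)

lemma snd_inv: "g \<in> carrier D \<Longrightarrow> snd (inv\<^bsub>D\<^esub> g) = snd g"
  by (elim dih_cases) (simp add: inv_dih)

lemma rotations_eq: "dihedral_rotations n = {g\<in>carrier D. snd g = False}"
  by (auto simp: dihedral_rotations_def carrier_dihedral)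

lemma rotations_iff: "g \<in> dihedral_rotations n \<longleftrightarrow> g \<in> carrier D \<and> \<not> snd g"
  by (cases g) (auto simp: dihedral_rotations_def carrier_dihedral)

end

context group
begin

lemma cayley_adj_sym:
  assumes "\<forall>s\<in>S. inv s \<in> S" "a \<in> carrier G" "b \<in> carrier G" "cayley_adj G S a b"
  shows "cayley_adj G S b a"
proof -
  have "inv (a \<otimes> inv b) = b \<otimes> inv a" using assms(2,3) by (simp add: inv_mult_group)
  moreover have "inv (a \<otimes> inv b) \<in> S" using assms unfolding cayley_adj_def by blast
  ultimately show ?thesis unfolding cayley_adj_def by simp
qed

lemma cayley_adj_irrefl: "\<one> \<notin> S \<Longrightarrow> a \<in> carrier G \<Longrightarrow> \<not> cayley_adj G S a a"
  by (simp add: cayley_adj_def)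

lemma cayley_adj_one: "a \<in> carrier G \<Longrightarrow> cayley_adj G S a \<one> \<longleftrightarrow> a \<in> S"
  by (simp add: cayley_adj_def)

lemma cayley_adj_mult_right:
  assumes "a \<in> carrier G" "b \<in> carrier G" "h \<in> carrier G"
  shows "cayley_adj G S (a \<otimes> h) (b \<otimes> h) \<longleftrightarrow> cayley_adj G S a b"
proof -
  have "a \<otimes> h \<otimes> inv (b \<otimes> h) = a \<otimes> inv b"
    using assms by (simp add: inv_mult_group m_assoc r_inv_ex flip: m_assoc[of h])
  then show ?thesis unfolding cayley_adj_def by simp
qed

end

locale cayley_bipartite_drg3 = group G for G (structure) +
  fixes S :: "'a set" and k \<mu> :: nat
  assumes S_sub: "S \<subseteq> carrier G - {\<one>}"
    and S_inv: "\<forall>s\<in>S. inv s \<in> S"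
    and drg: "distance_regular (carrier G) (cayley_adj G S) [k, k - 1, k - \<mu>] [1, \<mu>, k]"
    and mu_le_k: "\<mu> \<le> k" and k_pos: "0 < k"
begin

sublocale bipartite_drg3 "carrier G" "cayley_adj G S" k \<mu>
proof
  show "\<And>x. x \<in> carrier G \<Longrightarrow> \<not> cayley_adj G S x x"
    using cayley_adj_irrefl S_sub by blast
qed (use drg mu_le_k k_pos cayley_adj_sym[OF S_inv] in auto)

lemma adj_commute: "a \<in> carrier G \<Longrightarrow> b \<in> carrier G \<Longrightarrow> cayley_adj G S a b \<longleftrightarrow> cayley_adj G S b a"
  using adj_sym by blast

definition side :: "'a \<Rightarrow> bool" where
  "side g \<longleftrightarrow> odd (gdist g \<one>)"

lemma side_adj:
  assumes "a \<in> carrier G" "b \<in> carrier G" "cayley_adj G S a b"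
  shows "side a \<noteq> side b"
  using odd_dist_adj[OF assms(1) one_closed assms(2,3)] unfolding side_def by simp

lemma not_side_one: "\<not> side \<one>"
  unfolding side_def using dist_eq_0_iff[OF one_closed one_closed] by simp

lemma side_S: "s \<in> S \<Longrightarrow> side s"
proof -
  assume s: "s \<in> S"
  then have "s \<in> carrier G" using S_sub by auto
  then show "side s" using side_adj[OF _ one_closed] cayley_adj_one s not_side_one by blast
qed

text \<open>Right translations are automorphisms, hence preserve the parity of distances.\<close>
lemma side_mult:
  assumes g: "g \<in> carrier G" and h: "h \<in> carrier G"
  shows "side (g \<otimes> h) \<longleftrightarrow> side g \<noteq> side h"
proof -
  have "walk_of_length (carrier G) (cayley_adj G S) (gdist g \<one>) (g \<otimes> h) (\<one> \<otimes> h)"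
  proof (rule walk_of_length_map[OF _ _ walk_of_length_dist[OF g one_closed]])
    show "\<And>a. a \<in> carrier G \<Longrightarrow> a \<otimes> h \<in> carrier G" using h by simp
    show "\<And>a b. a \<in> carrier G \<Longrightarrow> b \<in> carrier G \<Longrightarrow> cayley_adj G S a b \<Longrightarrow>
        cayley_adj G S (a \<otimes> h) (b \<otimes> h)"
      using cayley_adj_mult_right h by blast
  qed
  then have "side h \<longleftrightarrow> side (g \<otimes> h) \<noteq> odd (gdist g \<one>)"
    using walk_of_length_parity[of "carrier G" "cayley_adj G S" side] side_adj h by simp
  then show ?thesis unfolding side_def by blast
qed

lemma even_dist_one_iff: "g \<in> carrier G \<Longrightarrow> even (gdist \<one> g) \<longleftrightarrow> \<not> side g"
  unfolding side_def using odd_dist_triangle[OF one_closed one_closed] dist_eq_0_iff[OF one_closed one_closed]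
  by simp

end

lemma card_odd_less_double: "card {a\<in>{0..<2 * m}. odd a = c} = (m :: nat)"
proof -
  have "{a\<in>{0..<2 * m}. odd a = c} = (\<lambda>i. 2 * i + of_bool c) ` {0..<m}"
  proof (rule equalityI; rule subsetI)
    fix a assume "a \<in> {a\<in>{0..<2 * m}. odd a = c}"
    then have "a = 2 * (a div 2) + of_bool c" "a div 2 < m" by auto
    then show "a \<in> (\<lambda>i. 2 * i + of_bool c) ` {0..<m}" by (metis atLeastLessThan_iff image_eqI zero_le)
  qed auto
  moreover have "inj_on (\<lambda>i::nat. 2 * i + of_bool c) {0..<m}" by (auto simp: inj_on_def)
  ultimately show ?thesis by (simp add: card_image)
qed

lemma sum_card_filter_swap:
  assumes "finite A" "finite B"
  shows "(\<Sum>a\<in>A. card {b\<in>B. P a b}) = (\<Sum>b\<in>B. card {a\<in>A. P a b})"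
proof -
  have "(\<Sum>a\<in>A. card {b\<in>B. P a b}) = (\<Sum>a\<in>A. \<Sum>b\<in>B. of_bool (P a b))"
    using assms by (simp add: sum.If_cases Int_def)
  also have "\<dots> = (\<Sum>b\<in>B. \<Sum>a\<in>A. of_bool (P a b))" by (rule sum.swap)
  also have "\<dots> = (\<Sum>b\<in>B. card {a\<in>A. P a b})"
    using assms by (simp add: sum.If_cases Int_def)
  finally show ?thesis .
qed

lemma sum_if_eq_else_if:
  assumes "finite A" "x \<in> A"
  shows "(\<Sum>h\<in>A. if h = x then a else if P h then b else 0) = a + of_nat (card {h\<in>A. h \<noteq> x \<and> P h}) * (b :: 'b :: comm_semiring_1)"
proof -
  have "(\<Sum>h\<in>A. if h = x then a else if P h then b else 0)
      = a + (\<Sum>h\<in>A - {x}. if h = x then a else if P h then b else 0)"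
    using assms by (simp add: sum.remove)
  also have "(\<Sum>h\<in>A - {x}. if h = x then a else if P h then b else 0) = (\<Sum>h\<in>A - {x}. if P h then b else 0)"
    by (rule sum.cong) auto
  also have "(\<Sum>h\<in>A - {x}. if P h then b else 0) = of_nat (card {h\<in>A - {x}. P h}) * b"
    using assms by (simp add: sum.If_cases Int_def)
  also have "{h\<in>A - {x}. P h} = {h\<in>A. h \<noteq> x \<and> P h}" by auto
  finally show ?thesis .
qed

lemma card_eq_by_inverse_maps:
  assumes "\<And>a. a \<in> A \<Longrightarrow> f a \<in> B \<and> g (f a) = a" "\<And>b. b \<in> B \<Longrightarrow> g b \<in> A \<and> f (g b) = b"
  shows "card A = card B"
  by (rule bij_betw_same_card[of f], rule bij_betw_byWitness[of _ g]) (use assms in auto)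

lemma pos_and_ne_of_parameter_equations:
  fixes a b m \<mu> :: nat
  assumes sq: "a * a + b * b = a + b + \<mu> * (m - 1)" and prod: "2 * a * b = \<mu> * m"
    and mu_less: "\<mu> + 1 < a + b" and m_pos: "0 < m"
  shows "0 < a \<and> a \<noteq> m"
proof -
  have sq': "int a * int a + int b * int b = int a + int b + int \<mu> * (int m - 1)"
    using sq m_pos by (metis (no_types, lifting) One_nat_def Suc_leI of_nat_1 of_nat_add of_nat_diff of_nat_mult)
  have prod': "2 * int a * int b = int \<mu> * int m"
    using prod by (metis of_nat_mult of_nat_numeral)
  have "0 < a"
  proof (rule ccontr)
    assume "\<not> 0 < a"
    then have "a = 0" "\<mu> = 0" using prod m_pos by auto
    then have "b * b = b" using sq by simp
    then have "b \<le> 1" using mult_eq_self_implies_10[of b b] by auto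
    then show False using \<open>a = 0\<close> mu_less by simp
  qed
  moreover have "a \<noteq> m"
  proof
    assume "a = m"
    then have mu: "int \<mu> = 2 * int b" using prod' m_pos by (simp add: algebra_simps)
    define d where "d = int m - int b"
    have "d * d = d" using sq' mu \<open>a = m\<close> unfolding d_def by (simp add: algebra_simps)
    moreover have "d \<ge> 2" using mu_less mu \<open>a = m\<close> unfolding d_def by simp
    then have "d * d \<ge> 2 * d" by (simp add: mult_right_mono)
    ultimately show False using \<open>d \<ge> 2\<close> by simp
  qed
  ultimately show ?thesis by simp
qed

definition adj_op :: "'a set \<Rightarrow> ('a \<Rightarrow> 'a \<Rightarrow> bool) \<Rightarrow> ('a \<Rightarrow> real) \<Rightarrow> 'a \<Rightarrow> real" where
  "adj_op V adj f x = (\<Sum>y\<in>{y\<in>V. adj x y}. f y)"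

lemma graph_eigenvalue_iff_adj_op:
  "graph_eigenvalue V adj lam \<longleftrightarrow> (\<exists>f. (\<exists>x\<in>V. f x \<noteq> 0) \<and> (\<forall>x\<in>V. adj_op V adj f x = lam * f x))"
  unfolding graph_eigenvalue_def adj_op_def ..

lemma sum_filter_eq_sum_of_bool:
  "finite A \<Longrightarrow> (\<Sum>x\<in>{x\<in>A. P x}. f x) = (\<Sum>x\<in>A. of_bool (P x) * (f x :: 'b :: semiring_1))"
proof -
  assume "finite A"
  then have "(\<Sum>x\<in>{x\<in>A. P x}. f x) = (\<Sum>x\<in>A. if P x then f x else 0)"
    by (rule sum.inter_filter)
  also have "\<dots> = (\<Sum>x\<in>A. of_bool (P x) * f x)" by (rule sum.cong) simp_all
  finally show ?thesis .
qed

lemma real_card_eq_sum_of_bool: "finite X \<Longrightarrow> real (card {z\<in>X. P z}) = (\<Sum>z\<in>X. of_bool (P z))"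
  by (simp add: sum.If_cases Int_def)

lemma graph_eigenvalue_cong:
  assumes "\<And>x y. x \<in> V \<Longrightarrow> y \<in> V \<Longrightarrow> adj x y \<longleftrightarrow> adj' x y"
  shows "graph_eigenvalue V adj = graph_eigenvalue V adj'"
proof -
  have "{y\<in>V. adj x y} = {y\<in>V. adj' x y}" if "x \<in> V" for x
    using assms that by auto
  then show ?thesis unfolding graph_eigenvalue_def by (intro ext) auto
qed

lemma adj_op_cong: "(\<And>y. y \<in> V \<Longrightarrow> f y = g y) \<Longrightarrow> adj_op V adj f x = adj_op V adj g x"
  unfolding adj_op_def by (rule sum.cong) auto

lemma adj_op_add: "adj_op V adj (\<lambda>y. f y + g y) x = adj_op V adj f x + adj_op V adj g x"
  unfolding adj_op_def by (simp add: sum.distrib)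

lemma adj_op_diff: "adj_op V adj (\<lambda>y. f y - g y) x = adj_op V adj f x - adj_op V adj g x"
  unfolding adj_op_def by (simp add: sum_subtractf)

lemma adj_op_scale: "adj_op V adj (\<lambda>y. c * f y) x = c * adj_op V adj f x"
  unfolding adj_op_def by (simp add: sum_distrib_left)

lemma adj_op_of_bool: "finite V \<Longrightarrow> adj_op V adj f x = (\<Sum>y\<in>V. of_bool (adj x y) * f y)"
  unfolding adj_op_def by (rule sum_filter_eq_sum_of_bool)

lemma adj_op_indicator:
  "finite V \<Longrightarrow> a \<in> V \<Longrightarrow> adj_op V adj (\<lambda>y. of_bool (y = a)) x = of_bool (adj x a)"
  by (simp add: adj_op_def of_bool_def sum.delta)

lemma adj_op_eigenvector_of_cube:
  assumes "\<And>x. x \<in> V \<Longrightarrow> adj_op V adj (adj_op V adj (adj_op V adj f)) x = s * s * adj_op V adj f x"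
    and "x \<in> V"
  shows "adj_op V adj (\<lambda>y. adj_op V adj (adj_op V adj f) y + s * adj_op V adj f y) x
    = s * (adj_op V adj (adj_op V adj f) x + s * adj_op V adj f x)"
  using assms by (simp add: adj_op_add adj_op_scale algebra_simps)

lemma adj_op_kernel_of_cube:
  assumes "\<And>x. x \<in> V \<Longrightarrow> adj_op V adj (adj_op V adj (adj_op V adj f)) x = K * adj_op V adj f x"
    and "x \<in> V"
  shows "adj_op V adj (\<lambda>y. adj_op V adj (adj_op V adj f) y - K * f y) x = 0"
  using assms by (simp add: adj_op_diff adj_op_scale)

section \<open>Distance-regular Cayley graphs on dihedral groups\<close>

locale dihedral_drg = dihedral n for n +
  fixes m k \<mu> :: nat and S :: "(nat \<times> bool) set"
  assumes n_eq: "n = 2 * m"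
    and S_sub: "S \<subseteq> carrier D - {\<one>\<^bsub>D\<^esub>}"
    and S_inv: "\<forall>s\<in>S. inv\<^bsub>D\<^esub> s \<in> S"
    and drg: "distance_regular (carrier D) (cayley_adj D S) [k, k - 1, k - \<mu>] [1, \<mu>, k]"
    and mu_less: "\<mu> < k - 1"
    and H_ne_C: "{g \<in> carrier D. even (graph_dist (carrier D) (cayley_adj D S) \<one>\<^bsub>D\<^esub> g)}
      \<noteq> dihedral_rotations n"
begin

sublocale cayley_bipartite_drg3 D S k \<mu>
  by (intro cayley_bipartite_drg3.intro[OF group_dihedral] cayley_bipartite_drg3_axioms.intro)
    (use S_sub S_inv drg mu_less in auto)

abbreviation V :: "(nat \<times> bool) set" where
  "V \<equiv> carrier D"

abbreviation adj :: "nat \<times> bool \<Rightarrow> nat \<times> bool \<Rightarrow> bool" where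
  "adj \<equiv> cayley_adj D S"

abbreviation C :: "(nat \<times> bool) set" where
  "C \<equiv> dihedral_rotations n"

lemma adj_dih: "adj (dih a p) (dih b q) \<longleftrightarrow> dih (if p = q then a - b else a + b) (p \<noteq> q) \<in> S"
  unfolding cayley_adj_def inv_dih mult_dih by (cases p; cases q) (simp_all add: diff_minus_eq_add)

lemma dih_uminus_in_S: "dih (- a) False \<in> S \<longleftrightarrow> dih a False \<in> S"
  using S_inv inv_dih[of a False] inv_dih[of "- a" False] by auto

lemma side_rotation: "side (dih (int a) False) \<longleftrightarrow> odd a \<and> side (dih 1 False)"
proof (induction a)
  case 0
  then show ?case using not_side_one by (simp add: one_dihedral)
next
  case (Suc a)
  have "dih (int (Suc a)) False = dih (int a) False \<otimes>\<^bsub>D\<^esub> dih 1 False"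
    by (simp add: mult_dih add.commute)
  then show ?case using Suc side_mult dih_in_carrier by auto
qed

lemma side_reflection: "side (dih a True) \<longleftrightarrow> side (dih a False) \<noteq> side (dih 0 True)"
proof -
  have "dih a True = dih a False \<otimes>\<^bsub>D\<^esub> dih 0 True" by (simp add: mult_dih)
  then show ?thesis using side_mult dih_in_carrier by metis
qed

lemma side_eq: "g \<in> V \<Longrightarrow> side g \<longleftrightarrow> (odd (fst g) \<and> side (dih 1 False)) \<noteq> (snd g \<and> side (dih 0 True))"
proof -
  assume "g \<in> V"
  then have g: "g = dih (int (fst g)) (snd g)" by (simp add: dih_fst_snd)
  show ?thesis
  proof (cases "snd g")
    case True
    then show ?thesis using side_reflection[of "int (fst g)"] side_rotation[of "fst g"] g by simp
  next
    case False
    then show ?thesis using side_rotation[of "fst g"] g by simp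
  qed
qed

text \<open>This is where \<open>H \<noteq> C\<close> is used: otherwise \<open>S\<close> would consist of reflections only.\<close>
lemma side_generator: "side (dih 1 False)"
proof (rule ccontr)
  assume not_side: "\<not> side (dih 1 False)"
  have "{z\<in>V. adj \<one>\<^bsub>D\<^esub> z} \<noteq> {}"
    using degree[OF one_closed] k_pos by (metis card.empty less_irrefl)
  then obtain s where "s \<in> V" "adj \<one>\<^bsub>D\<^esub> s" by auto
  then have s: "s \<in> S" using cayley_adj_sym[OF S_inv one_closed] cayley_adj_one by blast
  then have "side (dih 0 True)"
    using side_S[OF s] side_eq[of s] not_side S_sub by auto
  then have "{g \<in> V. even (gdist \<one>\<^bsub>D\<^esub> g)} = C"
    using side_eq not_side by (auto simp: even_dist_one_iff rotations_iff)
  then show False using H_ne_C by simp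
qed

lemma side_iff: "g \<in> V \<Longrightarrow> side g \<longleftrightarrow> odd (fst g) \<noteq> (snd g \<and> side (dih 0 True))"
  using side_eq side_generator by simp

lemma card_side_coset: "card {g\<in>V. snd g = q \<and> side g = b} = m"
proof -
  have "{g\<in>V. snd g = q \<and> side g = b} = (\<lambda>a. (a, q)) ` {a\<in>{0..<2 * m}. odd a = (b \<noteq> (q \<and> side (dih 0 True)))}"
  proof (rule equalityI; rule subsetI)
    fix g assume g: "g \<in> {g\<in>V. snd g = q \<and> side g = b}"
    then have "fst g < n" by (auto simp: carrier_dihedral mem_Times_iff)
    then have "fst g < 2 * m" by (simp add: n_eq)
    show "g \<in> (\<lambda>a. (a, q)) ` {a\<in>{0..<2 * m}. odd a = (b \<noteq> (q \<and> side (dih 0 True)))}"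
    proof (rule image_eqI)
      show "g = (fst g, q)" using g by (cases g) auto
    qed (use \<open>fst g < 2 * m\<close> g side_iff[of g] in auto)
  next
    fix g assume "g \<in> (\<lambda>a. (a, q)) ` {a\<in>{0..<2 * m}. odd a = (b \<noteq> (q \<and> side (dih 0 True)))}"
    then obtain a where a: "g = (a, q)" "a < n" "odd a = (b \<noteq> (q \<and> side (dih 0 True)))"
      using n_eq by auto
    then have "g \<in> V" by (simp add: carrier_dihedral)
    then show "g \<in> {g\<in>V. snd g = q \<and> side g = b}" using a side_iff[of g] by auto
  qed
  moreover have "inj (\<lambda>a::nat. (a, q))" by (auto simp: inj_def)
  ultimately show ?thesis using card_odd_less_double by (simp add: card_image inj_on_subset)
qed

end

section \<open>Counting neighbours by coset\<close>

context dihedral_drg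
begin

definition k1 :: nat where
  "k1 = card (S \<inter> C)"

definition k2 :: nat where
  "k2 = k - k1"

lemma neighbours_same_coset:
  assumes g: "g \<in> V"
  shows "{w\<in>V. snd w = snd g \<and> adj g w} = (\<lambda>s. inv\<^bsub>D\<^esub> s \<otimes>\<^bsub>D\<^esub> g) ` (S \<inter> C)"
proof (rule equalityI; rule subsetI)
  fix w assume "w \<in> {w\<in>V. snd w = snd g \<and> adj g w}"
  then have w: "w \<in> V" "snd w = snd g" "g \<otimes>\<^bsub>D\<^esub> inv\<^bsub>D\<^esub> w \<in> S"
    unfolding cayley_adj_def by auto
  show "w \<in> (\<lambda>s. inv\<^bsub>D\<^esub> s \<otimes>\<^bsub>D\<^esub> g) ` (S \<inter> C)"
  proof (rule image_eqI)
    show "w = inv\<^bsub>D\<^esub> (g \<otimes>\<^bsub>D\<^esub> inv\<^bsub>D\<^esub> w) \<otimes>\<^bsub>D\<^esub> g"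
      using g w by (simp add: inv_mult_group m_assoc)
    show "g \<otimes>\<^bsub>D\<^esub> inv\<^bsub>D\<^esub> w \<in> S \<inter> C"
      using g w by (simp add: rotations_iff snd_mult snd_inv)
  qed
next
  fix w assume "w \<in> (\<lambda>s. inv\<^bsub>D\<^esub> s \<otimes>\<^bsub>D\<^esub> g) ` (S \<inter> C)"
  then obtain s where s: "s \<in> S" "s \<in> V" "\<not> snd s" and w: "w = inv\<^bsub>D\<^esub> s \<otimes>\<^bsub>D\<^esub> g"
    by (auto simp: rotations_iff)
  have "g \<otimes>\<^bsub>D\<^esub> inv\<^bsub>D\<^esub> w = s"
    using g s by (simp add: w inv_mult_group m_assoc flip: m_assoc[of g])
  then show "w \<in> {w\<in>V. snd w = snd g \<and> adj g w}"
    using g s by (simp add: w cayley_adj_def snd_mult snd_inv)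
qed

lemma card_neighbours_same_coset: "g \<in> V \<Longrightarrow> card {w\<in>V. snd w = snd g \<and> adj g w} = k1"
proof -
  assume g: "g \<in> V"
  have "inj_on (\<lambda>s. inv\<^bsub>D\<^esub> s \<otimes>\<^bsub>D\<^esub> g) (S \<inter> C)"
  proof (rule inj_onI)
    fix s s' assume "s \<in> S \<inter> C" "s' \<in> S \<inter> C" and eq: "inv\<^bsub>D\<^esub> s \<otimes>\<^bsub>D\<^esub> g = inv\<^bsub>D\<^esub> s' \<otimes>\<^bsub>D\<^esub> g"
    then have "s \<in> V" "s' \<in> V" using S_sub by auto
    with eq g have "inv\<^bsub>D\<^esub> s = inv\<^bsub>D\<^esub> s'" by simp
    then show "s = s'" using \<open>s \<in> V\<close> \<open>s' \<in> V\<close> inv_inj by (simp add: inj_on_def)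
  qed
  then show ?thesis unfolding neighbours_same_coset[OF g] k1_def by (rule card_image)
qed

lemma k1_le_k: "k1 \<le> k"
proof -
  have "card {w\<in>V. snd w = snd \<one>\<^bsub>D\<^esub> \<and> adj \<one>\<^bsub>D\<^esub> w} \<le> card {w\<in>V. adj \<one>\<^bsub>D\<^esub> w}"
    by (rule card_mono) (use finite_V in auto)
  then show ?thesis using card_neighbours_same_coset[OF one_closed] degree[OF one_closed] by simp
qed

definition coset_degree :: "bool \<Rightarrow> bool \<Rightarrow> nat" where
  "coset_degree b c = (if b = c then k1 else k2)"

lemma card_neighbours_in_coset:
  assumes g: "g \<in> V"
  shows "card {w\<in>V. snd w = b \<and> adj g w} = coset_degree b (snd g)"
proof (cases "b = snd g")
  case True
  then show ?thesis using card_neighbours_same_coset[OF g] by (simp add: coset_degree_def)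
next
  case False
  have "{w\<in>V. adj g w} = {w\<in>V. snd w = snd g \<and> adj g w} \<union> {w\<in>V. snd w = b \<and> adj g w}"
    using False by (cases b) auto
  moreover have "{w\<in>V. snd w = snd g \<and> adj g w} \<inter> {w\<in>V. snd w = b \<and> adj g w} = {}"
    using False by auto
  ultimately have "k1 + card {w\<in>V. snd w = b \<and> adj g w} = k"
    using degree[OF g] card_neighbours_same_coset[OF g] finite_V by (simp add: card_Un_disjoint)
  then show ?thesis using False by (simp add: coset_degree_def k2_def)
qed

end

section \<open>Common neighbours and the parameters \<open>k\<^sub>1, k\<^sub>2\<close>\<close>

context dihedral_drg
begin

definition common_in :: "bool \<Rightarrow> nat \<times> bool \<Rightarrow> nat \<times> bool \<Rightarrow> nat" where
  "common_in b x y = card {z\<in>V. snd z = b \<and> adj x z \<and> adj z y}"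

lemma common_in_False_add_True: "common_in False x y + common_in True x y = card {z\<in>V. adj x z \<and> adj z y}"
proof -
  have "{z\<in>V. adj x z \<and> adj z y}
      = {z\<in>V. snd z = False \<and> adj x z \<and> adj z y} \<union> {z\<in>V. snd z = True \<and> adj x z \<and> adj z y}"
    by auto
  then show ?thesis unfolding common_in_def using finite_V by (simp add: card_Un_disjoint disjoint_iff)
qed

lemma card_common_neighbours_side:
  "x \<in> V \<Longrightarrow> y \<in> V \<Longrightarrow>
   card {z\<in>V. adj x z \<and> adj z y} = (if x = y then k else if side x = side y then \<mu> else 0)"
  unfolding side_def using card_common_neighbours[OF one_closed] by blast

lemma sum_common_in:
  assumes x: "x \<in> V"
  shows "(\<Sum>y\<in>{y\<in>V. snd y = c}. common_in b x y) = coset_degree b (snd x) * coset_degree b c"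
proof -
  have "(\<Sum>y\<in>{y\<in>V. snd y = c}. common_in b x y)
      = (\<Sum>z\<in>V. card {y\<in>{y\<in>V. snd y = c}. snd z = b \<and> adj x z \<and> adj z y})"
    unfolding common_in_def by (rule sum_card_filter_swap) (use finite_V in auto)
  also have "\<dots> = (\<Sum>z\<in>V. if snd z = b \<and> adj x z then coset_degree c b else 0)"
  proof (rule sum.cong)
    fix z assume "z \<in> V"
    then show "card {y\<in>{y\<in>V. snd y = c}. snd z = b \<and> adj x z \<and> adj z y}
        = (if snd z = b \<and> adj x z then coset_degree c b else 0)"
      using card_neighbours_in_coset[of z c] by (auto intro: arg_cong[where f = card])
  qed simp
  also have "\<dots> = (\<Sum>z\<in>{z\<in>V. snd z = b \<and> adj x z}. coset_degree c b)"
    by (rule sum.inter_filter[symmetric, OF finite_V])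
  also have "\<dots> = coset_degree b (snd x) * coset_degree b c"
    using card_neighbours_in_coset[OF x, of b] by (simp add: coset_degree_def)
  finally show ?thesis .
qed

lemma sum_common_neighbours_one:
  "(\<Sum>y\<in>{y\<in>V. snd y = c}. card {z\<in>V. adj \<one>\<^bsub>D\<^esub> z \<and> adj z y})
    = coset_degree False False * coset_degree False c + coset_degree True False * coset_degree True c"
  unfolding common_in_False_add_True[symmetric] sum.distrib sum_common_in[OF one_closed] by simp

lemma sum_squares_k1_k2: "k1 * k1 + k2 * k2 = k + \<mu> * (m - 1)"
proof -
  have "(\<Sum>y\<in>{y\<in>V. snd y = False}. card {z\<in>V. adj \<one>\<^bsub>D\<^esub> z \<and> adj z y})
      = (\<Sum>y\<in>{y\<in>V. snd y = False}. if y = \<one>\<^bsub>D\<^esub> then k else if \<not> side y then \<mu> else 0)"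
    by (rule sum.cong) (auto simp: card_common_neighbours_side not_side_one)
  also have "\<dots> = k + card {y\<in>{y\<in>V. snd y = False}. y \<noteq> \<one>\<^bsub>D\<^esub> \<and> \<not> side y} * \<mu>"
    using sum_if_eq_else_if[of "{y\<in>V. snd y = False}" "\<one>\<^bsub>D\<^esub>" k "\<lambda>y. \<not> side y" \<mu>] finite_V
    by simp
  also have "{y\<in>{y\<in>V. snd y = False}. y \<noteq> \<one>\<^bsub>D\<^esub> \<and> \<not> side y}
      = {y\<in>V. snd y = False \<and> side y = False} - {\<one>\<^bsub>D\<^esub>}"
    by auto
  also have "card \<dots> = m - 1"
    using card_side_coset[of False False] not_side_one finite_V by (simp add: card_Diff_singleton)
  finally show ?thesis using sum_common_neighbours_one[of False] by (simp add: coset_degree_def mult.commute)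
qed

lemma double_k1_k2: "2 * k1 * k2 = \<mu> * m"
proof -
  have "(\<Sum>y\<in>{y\<in>V. snd y = True}. card {z\<in>V. adj \<one>\<^bsub>D\<^esub> z \<and> adj z y})
      = (\<Sum>y\<in>{y\<in>V. snd y = True}. if \<not> side y then \<mu> else 0)"
  proof (rule sum.cong)
    fix y assume "y \<in> {y\<in>V. snd y = True}"
    then show "card {z\<in>V. adj \<one>\<^bsub>D\<^esub> z \<and> adj z y} = (if \<not> side y then \<mu> else 0)"
      using card_common_neighbours_side[OF one_closed, of y] not_side_one by auto
  qed simp
  also have "\<dots> = (\<Sum>y\<in>{y\<in>{y\<in>V. snd y = True}. \<not> side y}. \<mu>)"
    by (rule sum.inter_filter[symmetric]) (use finite_V in simp)
  also have "{y\<in>{y\<in>V. snd y = True}. \<not> side y} = {y\<in>V. snd y = True \<and> side y = False}"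
    by auto
  also have "(\<Sum>y\<in>{y\<in>V. snd y = True \<and> side y = False}. \<mu>) = \<mu> * card {y\<in>V. snd y = True \<and> side y = False}"
    by simp
  also have "\<dots> = \<mu> * m" using card_side_coset[of True False] by simp
  finally show ?thesis using sum_common_neighbours_one[of True] by (simp add: coset_degree_def)
qed

lemma k_eq: "k = k1 + k2"
  using k1_le_k unfolding k2_def by simp

lemma m_pos: "0 < m"
  using n_pos n_eq by simp

lemma k1_pos_ne_m: "0 < k1 \<and> k1 \<noteq> m" and k2_pos_ne_m: "0 < k2 \<and> k2 \<noteq> m"
proof -
  have sq: "k1 * k1 + k2 * k2 = k1 + k2 + \<mu> * (m - 1)" using sum_squares_k1_k2 k_eq by simp
  have less: "\<mu> + 1 < k1 + k2" using mu_less k_eq by simp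
  show "0 < k1 \<and> k1 \<noteq> m"
    using pos_and_ne_of_parameter_equations[OF sq double_k1_k2 less m_pos] .
  show "0 < k2 \<and> k2 \<noteq> m"
    using pos_and_ne_of_parameter_equations[of k2 k1 \<mu> m] sq double_k1_k2 less m_pos
    by (simp add: add.commute mult.commute)
qed

lemma square_k1_minus_k2: "(int k1 - int k2)^2 = int k - int \<mu>"
proof -
  have "int k1 * int k1 + int k2 * int k2 = int k + int \<mu> * (int m - 1)"
    using sum_squares_k1_k2 m_pos
    by (metis (no_types, lifting) One_nat_def Suc_leI of_nat_1 of_nat_add of_nat_diff of_nat_mult)
  moreover have "2 * int k1 * int k2 = int \<mu> * int m"
    using double_k1_k2 by (metis of_nat_mult of_nat_numeral)
  ultimately show ?thesis using k_eq by (simp add: power2_eq_square algebra_simps)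
qed

end

section \<open>Walks of length 3 inside the rotation subgroup\<close>

context dihedral_drg
begin

lemma rotation_neighbours_sym: "x \<in> C \<Longrightarrow> {y\<in>C. adj x y} = {y\<in>C. adj y x}"
proof (rule Set.set_eqI)
  fix y assume "x \<in> C"
  then show "y \<in> {y\<in>C. adj x y} \<longleftrightarrow> y \<in> {y\<in>C. adj y x}"
    using adj_commute[of x y] by (auto simp: rotations_iff)
qed

lemma card_rotation_neighbours: "y \<in> C \<Longrightarrow> card {w\<in>C. adj w y} = k1"
proof -
  assume y: "y \<in> C"
  then have "{w\<in>C. adj w y} = {w\<in>V. snd w = snd y \<and> adj y w}"
    using adj_commute unfolding rotations_iff by blast
  moreover have "y \<in> V" using y by (simp add: rotations_iff)
  ultimately show ?thesis using card_neighbours_same_coset by simp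
qed

lemma common_in_rotation_eq_reflection:
  assumes u: "u \<in> V" "snd u" and y: "y \<in> C"
  shows "common_in False u y = common_in True u y"
proof -
  define a c where "a = int (fst u)" and "c = int (fst y)"
  have u_eq: "u = dih a True"
    using dih_fst_snd[OF u(1)] u(2) unfolding a_def by simp
  have y_eq: "y = dih c False"
    using dih_fst_snd[of y] y unfolding c_def rotations_iff by simp
  have shift: "adj u (dih b False) \<and> adj (dih b False) y
      \<longleftrightarrow> adj u (dih (b + (a - c)) True) \<and> adj (dih (b + (a - c)) True) y" for b
    unfolding u_eq y_eq using dih_uminus_in_S[of "b - c"] by (simp add: adj_dih algebra_simps conj_commute)
  show ?thesis
    unfolding common_in_def
  proof (rule card_eq_by_inverse_maps[where f = "\<lambda>z. dih (int (fst z) + (a - c)) True"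
        and g = "\<lambda>v. dih (int (fst v) + (c - a)) False"])
    fix z assume z: "z \<in> {z\<in>V. snd z = False \<and> adj u z \<and> adj z y}"
    then have "dih (int (fst z)) False = z" using dih_fst_snd by fastforce
    then show "dih (int (fst z) + (a - c)) True \<in> {z\<in>V. snd z = True \<and> adj u z \<and> adj z y} \<and>
        dih (int (fst (dih (int (fst z) + (a - c)) True)) + (c - a)) False = z"
      using z shift[of "int (fst z)"] by (simp add: dih_in_carrier)
  next
    fix v assume v: "v \<in> {z\<in>V. snd z = True \<and> adj u z \<and> adj z y}"
    then have "dih (int (fst v)) True = v" using dih_fst_snd by fastforce
    then show "dih (int (fst v) + (c - a)) False \<in> {z\<in>V. snd z = False \<and> adj u z \<and> adj z y} \<and>
        dih (int (fst (dih (int (fst v) + (c - a)) False)) + (a - c)) True = v"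
      using v shift[of "int (fst v) + (c - a)"] by (simp add: dih_in_carrier)
  qed
qed

definition walks3_C :: "nat \<times> bool \<Rightarrow> nat \<times> bool \<Rightarrow> nat" where
  "walks3_C x y = (\<Sum>w\<in>{w\<in>C. adj w y}. common_in False x w)"

lemma walks3_C_same_side:
  assumes x: "x \<in> V" and y: "y \<in> V" and eq: "side x = side y"
  shows "walks3_C x y = 0"
proof -
  have "common_in False x w = 0" if w: "w \<in> C" "adj w y" for w
  proof -
    have "w \<in> V" using w by (simp add: rotations_iff)
    then have "{z\<in>V. snd z = False \<and> adj x z \<and> adj z w} = {}"
      using side_adj[OF x] side_adj[of _ w] side_adj[OF _ y] w eq by blast
    then show ?thesis unfolding common_in_def by (simp only: card.empty)
  qed
  then show ?thesis unfolding walks3_C_def by simp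
qed

lemma sum_card_common_neighbours_rotations:
  assumes x: "x \<in> C" and y: "y \<in> C" and side_ne: "side x \<noteq> side y"
  shows "int (\<Sum>w\<in>{w\<in>C. adj w y}. card {z\<in>V. adj x z \<and> adj z w})
    = int \<mu> * int k1 + of_bool (adj x y) * (int k - int \<mu>)"
proof -
  let ?W = "{w\<in>C. adj w y}"
  have xV: "x \<in> V" and yV: "y \<in> V" using x y by (simp_all add: rotations_iff)
  have fin: "finite ?W" by (simp add: dihedral_rotations_def)
  have "card {z\<in>V. adj x z \<and> adj z w} = (if w = x then k else \<mu>)" if "w \<in> ?W" for w
  proof -
    have "w \<in> V" using that by (simp add: rotations_iff)
    then show ?thesis
      using that side_adj[of w y] yV side_ne card_common_neighbours_side[OF xV] by auto
  qed
  then have "(\<Sum>w\<in>?W. card {z\<in>V. adj x z \<and> adj z w}) = (\<Sum>w\<in>?W. if w = x then k else if True then \<mu> else 0)"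
    by (intro sum.cong) auto
  also have "int \<dots> = int \<mu> * int k1 + of_bool (adj x y) * (int k - int \<mu>)"
  proof (cases "adj x y")
    case True
    then have "x \<in> ?W" using x by simp
    then have "(\<Sum>w\<in>?W. if w = x then k else if True then \<mu> else 0) = k + card (?W - {x}) * \<mu>"
      using sum_if_eq_else_if[OF fin, of x k "\<lambda>_. True" \<mu>] by (simp add: set_diff_eq conj_commute)
    moreover obtain j where j: "k1 = Suc j" using k1_pos_ne_m gr0_implies_Suc by blast
    moreover have "card (?W - {x}) = j"
      using \<open>x \<in> ?W\<close> card_rotation_neighbours[OF y] fin j by simp
    ultimately show ?thesis using True by (simp add: distrib_left)
  next
    case False
    then have "(\<Sum>w\<in>?W. if w = x then k else if True then \<mu> else 0) = (\<Sum>w\<in>?W. \<mu>)"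
      by (intro sum.cong) auto
    then show ?thesis using False card_rotation_neighbours[OF y] by simp
  qed
  finally show ?thesis by simp
qed

lemma double_sum_common_in_reflections:
  assumes x: "x \<in> C" and y: "y \<in> C" and side_ne: "side x \<noteq> side y"
  shows "2 * (\<Sum>w\<in>{w\<in>C. adj w y}. common_in True x w) = \<mu> * k2"
proof -
  let ?U = "{u\<in>V. snd u = True \<and> adj x u}"
  have xV: "x \<in> V" "\<not> snd x" and yV: "y \<in> V" using x y by (simp_all add: rotations_iff)
  have "(\<Sum>w\<in>{w\<in>C. adj w y}. common_in True x w)
      = (\<Sum>u\<in>V. card {w\<in>{w\<in>C. adj w y}. snd u = True \<and> adj x u \<and> adj u w})"
    unfolding common_in_def
    by (rule sum_card_filter_swap) (use finite_V in \<open>auto simp: dihedral_rotations_def\<close>)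
  also have "\<dots> = (\<Sum>u\<in>V. if u \<in> ?U then common_in False u y else 0)"
    by (rule sum.cong) (auto simp: common_in_def rotations_iff intro!: arg_cong[where f = card])
  also have "\<dots> = (\<Sum>u\<in>?U. common_in False u y)"
    using finite_V by (simp add: sum.inter_filter)
  finally have "2 * (\<Sum>w\<in>{w\<in>C. adj w y}. common_in True x w) = (\<Sum>u\<in>?U. 2 * common_in False u y)"
    by (simp add: sum_distrib_left)
  also have "\<dots> = (\<Sum>u\<in>?U. \<mu>)"
  proof (rule sum.cong)
    fix u assume "u \<in> ?U"
    then have u: "u \<in> V" "snd u" "adj x u" by auto
    then have "side u = side y" "u \<noteq> y" using side_adj[OF xV(1)] side_ne y by (auto simp: rotations_iff)
    then have "common_in False u y + common_in True u y = \<mu>"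
      using common_in_False_add_True card_common_neighbours_side[OF u(1) yV] by simp
    then show "2 * common_in False u y = \<mu>"
      using common_in_rotation_eq_reflection[OF u(1,2) y] by simp
  qed simp
  also have "\<dots> = \<mu> * k2"
    using card_neighbours_in_coset[OF xV(1), of True] xV(2) by (simp add: coset_degree_def)
  finally show ?thesis .
qed

lemma walks3_C_other_side:
  assumes x: "x \<in> C" and y: "y \<in> C" and side_ne: "side x \<noteq> side y"
  shows "2 * int (walks3_C x y) = 2 * (int k - int \<mu>) * of_bool (adj x y) + int \<mu> * (2 * int k1 - int k2)"
proof -
  have "walks3_C x y + (\<Sum>w\<in>{w\<in>C. adj w y}. common_in True x w)
      = (\<Sum>w\<in>{w\<in>C. adj w y}. card {z\<in>V. adj x z \<and> adj z w})"
    unfolding walks3_C_def common_in_False_add_True[symmetric] sum.distrib ..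
  from arg_cong[where f = int, OF this] have "int (walks3_C x y) + int (\<Sum>w\<in>{w\<in>C. adj w y}. common_in True x w)
      = int \<mu> * int k1 + of_bool (adj x y) * (int k - int \<mu>)"
    using sum_card_common_neighbours_rotations[OF assms] by simp
  moreover have "2 * int (\<Sum>w\<in>{w\<in>C. adj w y}. common_in True x w) = int \<mu> * int k2"
    using arg_cong[where f = int, OF double_sum_common_in_reflections[OF assms]] by simp
  ultimately show ?thesis by (simp add: algebra_simps)
qed

end

section \<open>The design on the rotation subgroup\<close>

context dihedral_drg
begin

abbreviation adj_C :: "nat \<times> bool \<Rightarrow> nat \<times> bool \<Rightarrow> bool" where
  "adj_C \<equiv> cayley_adj D (S \<inter> C)"

lemma adj_C_iff: "x \<in> C \<Longrightarrow> y \<in> C \<Longrightarrow> adj_C x y \<longleftrightarrow> adj x y"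
  unfolding cayley_adj_def by (auto simp: rotations_iff snd_mult snd_inv)

lemma finite_C: "finite C"
  by (simp add: dihedral_rotations_def)

lemma common_in_False_eq: "common_in False x y = card {z\<in>C. adj x z \<and> adj z y}"
  unfolding common_in_def rotations_iff by (intro arg_cong[where f = card]) auto

definition points :: "(nat \<times> bool) set" where
  "points = {x\<in>C. side x}"

definition blocks :: "(nat \<times> bool) set" where
  "blocks = {x\<in>C. \<not> side x}"

lemma card_points: "card points = m" and card_blocks: "card blocks = m"
  using card_side_coset[of False True] card_side_coset[of False False]
  unfolding points_def blocks_def rotations_iff by (simp_all add: conj_ac)

definition flag_pairs :: "nat \<times> bool \<Rightarrow> nat \<times> bool \<Rightarrow> ((nat \<times> bool) \<times> (nat \<times> bool)) set" where
  "flag_pairs p B = {(p', B'). p' \<in> points \<and> B' \<in> blocks \<and> adj_C p' B' \<and> p' \<noteq> p \<and> B' \<noteq> B \<and>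
                              adj_C p' B \<and> adj_C p B'}"

lemma flag_pairs_eq_Sigma:
  assumes p: "p \<in> points" and B: "B \<in> blocks"
  shows "flag_pairs p B = Sigma ({w\<in>C. adj w B} - {p}) (\<lambda>p'. {z\<in>C. adj p z \<and> adj z p'} - {B})"
proof (rule equalityI; rule subsetI)
  have C: "p \<in> C" "B \<in> C" using p B unfolding points_def blocks_def by auto
  fix f assume "f \<in> flag_pairs p B"
  then obtain p' B' where f: "f = (p', B')" and "p' \<in> points" "B' \<in> blocks"
    and adj: "adj_C p' B'" "adj_C p' B" "adj_C p B'" and ne: "p' \<noteq> p" "B' \<noteq> B"
    unfolding flag_pairs_def by blast
  then have C': "p' \<in> C" "B' \<in> C" unfolding points_def blocks_def by auto
  then have "adj p' B" "adj p B'" "adj B' p'"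
    using adj adj_C_iff C adj_commute[of p' B'] by (auto simp: rotations_iff)
  then show "f \<in> Sigma ({w\<in>C. adj w B} - {p}) (\<lambda>p'. {z\<in>C. adj p z \<and> adj z p'} - {B})"
    using f C' ne by simp
next
  have C: "p \<in> C" "B \<in> C" and side: "side p" "\<not> side B"
    using p B unfolding points_def blocks_def by auto
  fix f assume "f \<in> Sigma ({w\<in>C. adj w B} - {p}) (\<lambda>p'. {z\<in>C. adj p z \<and> adj z p'} - {B})"
  then obtain p' B' where f: "f = (p', B')" and C': "p' \<in> C" "B' \<in> C"
    and adj: "adj p' B" "adj p B'" "adj B' p'" and ne: "p' \<noteq> p" "B' \<noteq> B"
    by blast
  have V: "p \<in> V" "B \<in> V" "p' \<in> V" "B' \<in> V" using C C' by (simp_all add: rotations_iff)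
  have "side p'" "\<not> side B'" using side_adj[OF V(3,2) adj(1)] side_adj[OF V(1,4) adj(2)] side by auto
  moreover have "adj_C p' B'" "adj_C p' B" "adj_C p B'"
    using adj adj_C_iff C C' adj_commute[OF V(4,3)] by simp_all
  ultimately show "f \<in> flag_pairs p B"
    using f C' ne unfolding flag_pairs_def points_def blocks_def by simp
qed

lemma card_flag_pairs:
  assumes p: "p \<in> points" and B: "B \<in> blocks"
  shows "int (card (flag_pairs p B)) = int (walks3_C p B) - of_bool (adj p B) * (2 * int k1 - 1)"
proof -
  let ?W = "{w\<in>C. adj w B}"
  have C: "p \<in> C" "B \<in> C" and pV: "p \<in> V" and BV: "B \<in> V"
    using p B unfolding points_def blocks_def by (auto simp: rotations_iff)
  have fin: "finite ?W" using finite_C by simp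
  have pW: "p \<in> ?W \<longleftrightarrow> adj p B" using C by simp
  have inner: "int (card ({z\<in>C. adj p z \<and> adj z p'} - {B})) = int (common_in False p p') - of_bool (adj p B)"
    if "p' \<in> ?W" for p'
  proof -
    have "B \<in> {z\<in>C. adj p z \<and> adj z p'} \<longleftrightarrow> adj p B"
      using that C BV adj_commute[of B p'] by (auto simp: rotations_iff)
    moreover have "card {z\<in>C. adj p z \<and> adj z p'} \<ge> 1" if "B \<in> {z\<in>C. adj p z \<and> adj z p'}"
    proof -
      have "finite {z\<in>C. adj p z \<and> adj z p'}" using finite_C by simp
      then show ?thesis using that card_gt_0_iff by (metis Suc_leI One_nat_def empty_iff)
    qed
    ultimately show ?thesis by (simp add: common_in_False_eq card_Diff_singleton_if of_nat_diff)
  qed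
  have "int (card (flag_pairs p B)) = (\<Sum>p'\<in>?W - {p}. int (common_in False p p') - of_bool (adj p B))"
    unfolding flag_pairs_eq_Sigma[OF p B] using fin finite_C inner by (simp add: card_SigmaI)
  also have "\<dots> = (\<Sum>p'\<in>?W - {p}. int (common_in False p p')) - of_bool (adj p B) * int (card (?W - {p}))"
    by (simp add: sum_subtractf)
  also have "(\<Sum>p'\<in>?W - {p}. int (common_in False p p')) = int (walks3_C p B) - of_bool (adj p B) * int k1"
  proof -
    have "common_in False p p = k1"
      using card_neighbours_in_coset[OF pV, of False] C adj_commute pV
      by (simp add: common_in_def coset_degree_def rotations_iff conj_absorb cong: conj_cong)
    then show ?thesis using pW fin unfolding walks3_C_def by (simp add: sum_diff1 of_nat_sum)
  qed
  also have "int (card (?W - {p})) = int k1 - of_bool (adj p B)"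
    using pW fin card_rotation_neighbours[OF C(2)] k1_pos_ne_m by (simp add: card_Diff_singleton_if of_nat_diff)
  finally show ?thesis by (simp add: algebra_simps)
qed

lemma one_in_blocks: "\<one>\<^bsub>D\<^esub> \<in> blocks"
  unfolding blocks_def using not_side_one by (simp add: rotations_iff)

lemma rotation_neighbours_one_subset: "{w\<in>C. adj w \<one>\<^bsub>D\<^esub>} \<subseteq> points"
  unfolding points_def using side_adj[OF _ one_closed] not_side_one by (auto simp: rotations_iff)

lemma exists_point_not_adj_one: "\<exists>x\<in>points. \<not> adj x \<one>\<^bsub>D\<^esub>"
proof (rule ccontr)
  assume "\<not> ?thesis"
  then have "points = {w\<in>C. adj w \<one>\<^bsub>D\<^esub>}"
    using rotation_neighbours_one_subset unfolding points_def by auto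
  then show False
    using card_points card_rotation_neighbours one_in_blocks k1_pos_ne_m unfolding blocks_def by auto
qed

lemma exists_point_adj_one: "\<exists>x\<in>points. adj x \<one>\<^bsub>D\<^esub>"
  using card_rotation_neighbours[of "\<one>\<^bsub>D\<^esub>"] one_in_blocks k1_pos_ne_m rotation_neighbours_one_subset
  unfolding blocks_def by (metis (no_types, lifting) card.empty empty_Collect_eq less_irrefl mem_Collect_eq subsetD)

definition alpha :: nat where
  "alpha = nat (int \<mu> * (2 * int k1 - int k2) div 2)"

definition beta :: nat where
  "beta = nat (int alpha + int k - int \<mu> - 2 * int k1 + 1)"

lemma two_alpha: "2 * int alpha = int \<mu> * (2 * int k1 - int k2)"
proof -
  obtain x where x: "x \<in> points" "\<not> adj x \<one>\<^bsub>D\<^esub>" using exists_point_not_adj_one by blast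
  have "side x" "x \<in> C" using x unfolding points_def by auto
  then have "2 * int (walks3_C x \<one>\<^bsub>D\<^esub>) = int \<mu> * (2 * int k1 - int k2)"
    using walks3_C_other_side[of x "\<one>\<^bsub>D\<^esub>"] one_in_blocks x(2) not_side_one unfolding blocks_def by simp
  then show ?thesis unfolding alpha_def by (metis nat_int nonzero_mult_div_cancel_left zero_neq_numeral)
qed

lemma card_flag_pairs_eq:
  assumes p: "p \<in> points" and B: "B \<in> blocks"
  shows "int (card (flag_pairs p B)) = (if adj p B then int alpha + int k - int \<mu> - 2 * int k1 + 1 else int alpha)"
proof -
  have "p \<in> C" "B \<in> C" "side p \<noteq> side B" using p B unfolding points_def blocks_def by auto
  then have "2 * int (walks3_C p B) = 2 * (int k - int \<mu>) * of_bool (adj p B) + 2 * int alpha"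
    using walks3_C_other_side two_alpha by simp
  then show ?thesis using card_flag_pairs[OF p B] by (cases "adj p B") simp_all
qed

lemma int_beta: "int beta = int alpha + int k - int \<mu> - 2 * int k1 + 1"
proof -
  obtain x where "x \<in> points" "adj x \<one>\<^bsub>D\<^esub>" using exists_point_adj_one by blast
  then have "int alpha + int k - int \<mu> - 2 * int k1 + 1 \<ge> 0"
    using card_flag_pairs_eq[of x "\<one>\<^bsub>D\<^esub>"] one_in_blocks by fastforce
  then show ?thesis unfolding beta_def by simp
qed

lemma blocks_adjacent_to_point:
  assumes "p \<in> points"
  shows "{B\<in>blocks. adj_C p B} = {w\<in>C. adj w p}"
proof (rule Set.set_eqI)
  fix w
  have p: "p \<in> C" "p \<in> V" "side p" using assms unfolding points_def by (auto simp: rotations_iff)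
  show "w \<in> {B\<in>blocks. adj_C p B} \<longleftrightarrow> w \<in> {w\<in>C. adj w p}"
  proof (cases "w \<in> C")
    case True
    then have "w \<in> V" by (simp add: rotations_iff)
    then show ?thesis
      using True adj_C_iff[OF p(1) True] side_adj[OF p(2) \<open>w \<in> V\<close>] adj_commute[OF p(2) \<open>w \<in> V\<close>] p
      unfolding blocks_def by auto
  qed (simp add: blocks_def)
qed

lemma points_adjacent_to_block:
  assumes "B \<in> blocks"
  shows "{p\<in>points. adj_C p B} = {w\<in>C. adj w B}"
proof (rule Set.set_eqI)
  fix w
  have B: "B \<in> C" "B \<in> V" "\<not> side B" using assms unfolding blocks_def by (auto simp: rotations_iff)
  show "w \<in> {p\<in>points. adj_C p B} \<longleftrightarrow> w \<in> {w\<in>C. adj w B}"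
  proof (cases "w \<in> C")
    case True
    then have "w \<in> V" by (simp add: rotations_iff)
    then show ?thesis
      using True adj_C_iff[OF True B(1)] side_adj[OF \<open>w \<in> V\<close> B(2)] B unfolding points_def by auto
  qed (simp add: points_def)
qed

lemma spgd_incidence_graph_C: "spgd_incidence_graph C adj_C m k1 alpha beta"
  unfolding spgd_incidence_graph_def
proof (rule exI[of _ points], rule exI[of _ blocks], intro conjI ballI)
  show "points \<inter> blocks = {}" "points \<union> blocks = C"
    unfolding points_def blocks_def by auto
  show "card points = m" by (fact card_points)
  show "card blocks = m" by (fact card_blocks)
  show "finite C" by (fact finite_C)
next
  fix x y assume xy: "x \<in> C" "y \<in> C"
  then have "adj_C x y \<longleftrightarrow> adj_C y x" "adj_C x y \<Longrightarrow> side x \<noteq> side y"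
    using adj_C_iff adj_commute side_adj by (auto simp: rotations_iff)
  then show "adj_C x y = (x \<in> points \<and> y \<in> blocks \<and> adj_C x y \<or> x \<in> blocks \<and> y \<in> points \<and> adj_C y x)"
    using xy unfolding points_def blocks_def by auto
next
  fix B assume "B \<in> blocks"
  then show "card {p\<in>points. adj_C p B} = k1"
    using points_adjacent_to_block card_rotation_neighbours unfolding blocks_def by simp
next
  fix p assume "p \<in> points"
  then show "card {B\<in>blocks. adj_C p B} = k1"
    using blocks_adjacent_to_point card_rotation_neighbours unfolding points_def by simp
next
  fix p B assume p: "p \<in> points" and B: "B \<in> blocks"
  then have "adj_C p B \<longleftrightarrow> adj p B" using adj_C_iff unfolding points_def blocks_def by simp
  then have "card (flag_pairs p B) = (if adj_C p B then beta else alpha)"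
    using card_flag_pairs_eq[OF p B] int_beta by (cases "adj p B") simp_all
  then show "card {(p', B'). p' \<in> points \<and> B' \<in> blocks \<and> adj_C p' B' \<and> p' \<noteq> p \<and> B' \<noteq> B \<and>
                              adj_C p' B \<and> adj_C p B'} = (if adj_C p B then beta else alpha)"
    unfolding flag_pairs_def .
qed

end

section \<open>The spectrum of the rotation part\<close>

context dihedral_drg
begin

abbreviation A :: "(nat \<times> bool \<Rightarrow> real) \<Rightarrow> nat \<times> bool \<Rightarrow> real" where
  "A \<equiv> adj_op C adj"

definition part_sum :: "bool \<Rightarrow> (nat \<times> bool \<Rightarrow> real) \<Rightarrow> real" where
  "part_sum b f = (\<Sum>y\<in>{y\<in>C. side y = b}. f y)"

lemma graph_eigenvalue_C: "graph_eigenvalue C adj_C = graph_eigenvalue C adj"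
  by (rule graph_eigenvalue_cong) (simp add: adj_C_iff)

lemma adj_op_cube_eq_walks3_C: "A (A (A f)) x = (\<Sum>y\<in>C. real (walks3_C x y) * f y)"
proof -
  have walks: "real (walks3_C x y)
      = (\<Sum>w\<in>C. of_bool (adj w y) * (\<Sum>z\<in>C. of_bool (adj x z) * of_bool (adj z w)))" for y
  proof -
    have "real (walks3_C x y) = (\<Sum>w\<in>C. of_bool (adj w y) * real (common_in False x w))"
      unfolding walks3_C_def of_nat_sum by (rule sum_filter_eq_sum_of_bool[OF finite_C])
    also have "\<dots> = (\<Sum>w\<in>C. of_bool (adj w y) * (\<Sum>z\<in>C. of_bool (adj x z) * of_bool (adj z w)))"
      unfolding common_in_False_eq real_card_eq_sum_of_bool[OF finite_C] by (simp add: of_bool_conj)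
    finally show ?thesis .
  qed
  have "A (A (A f)) x = (\<Sum>z\<in>C. \<Sum>w\<in>C. \<Sum>y\<in>C. of_bool (adj x z) * of_bool (adj z w) * of_bool (adj w y) * f y)"
    unfolding adj_op_of_bool[OF finite_C] by (simp add: sum_distrib_left mult.assoc)
  also have "\<dots> = (\<Sum>w\<in>C. \<Sum>z\<in>C. \<Sum>y\<in>C. of_bool (adj x z) * of_bool (adj z w) * of_bool (adj w y) * f y)"
    by (rule sum.swap)
  also have "\<dots> = (\<Sum>w\<in>C. \<Sum>y\<in>C. \<Sum>z\<in>C. of_bool (adj x z) * of_bool (adj z w) * of_bool (adj w y) * f y)"
    by (rule sum.cong[OF refl], rule sum.swap)
  also have "\<dots> = (\<Sum>y\<in>C. \<Sum>w\<in>C. \<Sum>z\<in>C. of_bool (adj x z) * of_bool (adj z w) * of_bool (adj w y) * f y)"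
    by (rule sum.swap)
  also have "\<dots> = (\<Sum>y\<in>C. real (walks3_C x y) * f y)"
    unfolding walks by (simp add: sum_distrib_left sum_distrib_right mult_ac)
  finally show ?thesis .
qed

lemma real_alpha: "real alpha = real \<mu> * (2 * real k1 - real k2) / 2"
  using arg_cong[where f = real_of_int, OF two_alpha] by simp

lemma adj_op_cube:
  assumes x: "x \<in> C"
  shows "A (A (A f)) x = (real k - real \<mu>) * A f x + real alpha * part_sum (\<not> side x) f"
proof -
  have walks: "real (walks3_C x y) = (real k - real \<mu>) * of_bool (adj x y) + real alpha * of_bool (side y = (\<not> side x))"
    if y: "y \<in> C" for y
  proof (cases "side x = side y")
    case True
    have "x \<in> V" "y \<in> V" using x y by (simp_all add: rotations_iff)
    then have "\<not> adj x y" "walks3_C x y = 0"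
      using side_adj walks3_C_same_side True by blast+
    then show ?thesis using True by simp
  next
    case False
    then have "2 * real (walks3_C x y) = 2 * (real k - real \<mu>) * of_bool (adj x y) + 2 * real alpha"
      using arg_cong[where f = real_of_int, OF walks3_C_other_side[OF x y False]] two_alpha real_alpha by simp
    then show ?thesis using False by (cases "adj x y") simp_all
  qed
  have "A (A (A f)) x = (\<Sum>y\<in>C. (real k - real \<mu>) * (of_bool (adj x y) * f y)
      + real alpha * (of_bool (side y = (\<not> side x)) * f y))"
    unfolding adj_op_cube_eq_walks3_C
  proof (rule sum.cong)
    fix y assume "y \<in> C"
    then show "real (walks3_C x y) * f y = (real k - real \<mu>) * (of_bool (adj x y) * f y)
        + real alpha * (of_bool (side y = (\<not> side x)) * f y)"
      unfolding walks[OF \<open>y \<in> C\<close>] by (simp add: algebra_simps)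
  qed simp
  also have "\<dots> = (real k - real \<mu>) * A f x + real alpha * part_sum (\<not> side x) f"
    unfolding adj_op_of_bool[OF finite_C] part_sum_def sum.distrib sum_distrib_left[symmetric]
      sum_filter_eq_sum_of_bool[OF finite_C] ..
  finally show ?thesis .
qed

lemma part_sum_adj_op: "part_sum b (A f) = real k1 * part_sum (\<not> b) f"
proof -
  have "part_sum b (A f) = (\<Sum>x\<in>{x\<in>C. side x = b}. \<Sum>y\<in>C. of_bool (adj x y) * f y)"
    unfolding part_sum_def adj_op_of_bool[OF finite_C] ..
  also have "\<dots> = (\<Sum>y\<in>C. \<Sum>x\<in>{x\<in>C. side x = b}. of_bool (adj x y) * f y)"
    by (rule sum.swap)
  also have "\<dots> = (\<Sum>y\<in>C. real (card {x\<in>{x\<in>C. side x = b}. adj x y}) * f y)"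
  proof (rule sum.cong)
    fix y
    have "real (card {x\<in>{x\<in>C. side x = b}. adj x y}) = (\<Sum>x\<in>{x\<in>C. side x = b}. of_bool (adj x y))"
      by (rule real_card_eq_sum_of_bool) (simp add: finite_C)
    then show "(\<Sum>x\<in>{x\<in>C. side x = b}. of_bool (adj x y) * f y)
        = real (card {x\<in>{x\<in>C. side x = b}. adj x y}) * f y"
      by (simp add: sum_distrib_right)
  qed simp
  also have "\<dots> = (\<Sum>y\<in>C. of_bool (side y = (\<not> b)) * (real k1 * f y))"
  proof (rule sum.cong)
    fix y assume y: "y \<in> C"
    have "{x\<in>{x\<in>C. side x = b}. adj x y} = (if side y = (\<not> b) then {w\<in>C. adj w y} else {})"
    proof (rule Set.set_eqI)
      fix x
      have "x \<in> C \<Longrightarrow> adj x y \<Longrightarrow> side x \<noteq> side y"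
        using side_adj[of x y] y by (simp add: rotations_iff)
      then show "x \<in> {x\<in>{x\<in>C. side x = b}. adj x y} \<longleftrightarrow> x \<in> (if side y = (\<not> b) then {w\<in>C. adj w y} else {})"
        by auto
    qed
    then show "real (card {x\<in>{x\<in>C. side x = b}. adj x y}) * f y = of_bool (side y = (\<not> b)) * (real k1 * f y)"
      using card_rotation_neighbours[OF y] by simp
  qed simp
  also have "\<dots> = real k1 * part_sum (\<not> b) f"
    unfolding part_sum_def sum_filter_eq_sum_of_bool[OF finite_C] sum_distrib_left
    by (simp add: mult_ac)
  finally show ?thesis .
qed

lemma eigenvalue_cases:
  assumes "graph_eigenvalue C adj lam"
  shows "lam \<in> {real k1, - real k1, sqrt (real k - real \<mu>), - sqrt (real k - real \<mu>), 0}"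
proof -
  obtain f x0 where x0: "x0 \<in> C" "f x0 \<noteq> 0" and ev: "\<And>x. x \<in> C \<Longrightarrow> A f x = lam * f x"
    using assms unfolding graph_eigenvalue_iff_adj_op by blast
  have A2: "A (A f) x = lam * lam * f x" if "x \<in> C" for x
    using adj_op_cong[of C "A f" "\<lambda>y. lam * f y"] ev that by (simp add: adj_op_scale)
  have A3: "A (A (A f)) x0 = lam * lam * lam * f x0"
    using adj_op_cong[of C "A (A f)" "\<lambda>y. lam * lam * f y"] A2 ev x0(1) by (simp add: adj_op_scale)
  have part: "lam * part_sum b f = real k1 * part_sum (\<not> b) f" for b
    using part_sum_adj_op[of b f] ev unfolding part_sum_def by (simp add: sum_distrib_left)
  show ?thesis
  proof (cases "lam * lam = real k1 * real k1")
    case True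
    then show ?thesis by (auto simp: square_eq_iff)
  next
    case False
    have "(lam * lam - real k1 * real k1) * part_sum b f = 0" for b
      using part[of b] part[of "\<not> b"] by (simp add: algebra_simps)
    then have "part_sum b f = 0" for b using False by simp
    then have "lam * lam * lam * f x0 = (real k - real \<mu>) * (lam * f x0)"
      using adj_op_cube[OF x0(1), of f] A3 ev[OF x0(1)] by simp
    then have "(lam * (lam * lam - (real k - real \<mu>))) * f x0 = 0"
      by (simp add: algebra_simps)
    then have "lam * (lam * lam - (real k - real \<mu>)) = 0"
      using x0(2) by simp
    then have "lam = 0 \<or> lam\<^sup>2 = real k - real \<mu>" by (simp add: power2_eq_square)
    moreover have "lam = sqrt (real k - real \<mu>) \<or> lam = - sqrt (real k - real \<mu>)"
      if "lam\<^sup>2 = real k - real \<mu>"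
      using real_sqrt_abs[of lam] that by (cases "lam \<ge> 0") auto
    ultimately show ?thesis by auto
  qed
qed

lemma eigenvalue_k1: "graph_eigenvalue C adj (real k1)"
  unfolding graph_eigenvalue_iff_adj_op
proof (intro exI[of _ "\<lambda>_. 1"] conjI ballI bexI[of _ "\<one>\<^bsub>D\<^esub>"])
  fix x assume "x \<in> C"
  then show "A (\<lambda>_. 1) x = real k1 * 1"
    using card_rotation_neighbours rotation_neighbours_sym unfolding adj_op_def by simp
qed (use one_in_blocks in \<open>simp_all add: blocks_def\<close>)

lemma eigenvalue_minus_k1: "graph_eigenvalue C adj (- real k1)"
  unfolding graph_eigenvalue_iff_adj_op
proof (intro exI[of _ "\<lambda>y. if side y then 1 else -1"] conjI ballI bexI[of _ "\<one>\<^bsub>D\<^esub>"])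
  fix x assume x: "x \<in> C"
  have "A (\<lambda>y. if side y then 1 else -1) x = (\<Sum>y\<in>{y\<in>C. adj x y}. if side x then -1 else 1)"
    unfolding adj_op_def
  proof (rule sum.cong)
    fix y assume "y \<in> {y\<in>C. adj x y}"
    then have "side x \<noteq> side y" using side_adj[of x y] x by (simp add: rotations_iff)
    then show "(if side y then 1 else -1) = (if side x then -1 else (1::real))" by auto
  qed simp
  then show "A (\<lambda>y. if side y then 1 else -1) x = - real k1 * (if side x then 1 else -1)"
    using card_rotation_neighbours[OF x] rotation_neighbours_sym[OF x] by simp
qed (use one_in_blocks in \<open>simp_all add: blocks_def\<close>)

lemma sum_common_in_blocks:
  "real k1 * real k1 = real k1 + (\<Sum>y\<in>blocks - {\<one>\<^bsub>D\<^esub>}. real (common_in False \<one>\<^bsub>D\<^esub> y))"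
proof -
  have one: "\<one>\<^bsub>D\<^esub> \<in> blocks" "\<one>\<^bsub>D\<^esub> \<in> C" using one_in_blocks unfolding blocks_def by auto
  have "real (common_in False \<one>\<^bsub>D\<^esub> y) = 0" if "y \<in> points" for y
  proof -
    have "{z\<in>C. adj \<one>\<^bsub>D\<^esub> z \<and> adj z y} = {}"
      using that side_adj[OF one_closed] side_adj[of _ y] not_side_one
      unfolding points_def rotations_iff by blast
    then show ?thesis unfolding common_in_False_eq by (simp only: card.empty of_nat_0)
  qed
  moreover have "C = (blocks - {\<one>\<^bsub>D\<^esub>}) \<union> points \<union> {\<one>\<^bsub>D\<^esub>}"
    using one unfolding points_def blocks_def by auto
  moreover have "common_in False \<one>\<^bsub>D\<^esub> \<one>\<^bsub>D\<^esub> = k1"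
    using card_rotation_neighbours[OF one(2)] rotation_neighbours_sym[OF one(2)]
    unfolding common_in_False_eq by (simp add: rotations_iff adj_commute[OF one_closed] cong: conj_cong)
  moreover have "(\<Sum>y\<in>C. real (common_in False \<one>\<^bsub>D\<^esub> y)) = real k1 * real k1"
    using sum_common_in[OF one_closed, of False False] unfolding rotations_eq
    by (simp add: coset_degree_def flip: of_nat_sum of_nat_mult)
  moreover have "finite (blocks - {\<one>\<^bsub>D\<^esub>})" "finite points" "\<one>\<^bsub>D\<^esub> \<notin> (blocks - {\<one>\<^bsub>D\<^esub>}) \<union> points"
    "(blocks - {\<one>\<^bsub>D\<^esub>}) \<inter> points = {}"
    using finite_C not_side_one unfolding points_def blocks_def by auto
  ultimately show ?thesis by (simp add: sum.union_disjoint)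
qed

lemma exists_block_common_in_ne:
  assumes "real k1 * real k1 \<noteq> real k1 + v * (real m - 1)"
  shows "\<exists>y\<in>blocks - {\<one>\<^bsub>D\<^esub>}. real (common_in False \<one>\<^bsub>D\<^esub> y) \<noteq> v"
proof (rule ccontr)
  assume "\<not> ?thesis"
  then have "(\<Sum>y\<in>blocks - {\<one>\<^bsub>D\<^esub>}. real (common_in False \<one>\<^bsub>D\<^esub> y)) = v * real (card (blocks - {\<one>\<^bsub>D\<^esub>}))"
    by simp
  moreover have "real (card (blocks - {\<one>\<^bsub>D\<^esub>})) = real m - 1"
    using card_blocks one_in_blocks m_pos finite_C unfolding blocks_def by (simp add: of_nat_diff)
  ultimately show False using sum_common_in_blocks assms by (simp add: mult.commute)
qed

definition delta_diff :: "nat \<times> bool \<Rightarrow> nat \<times> bool \<Rightarrow> real" where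
  "delta_diff y0 y = of_bool (y = \<one>\<^bsub>D\<^esub>) - of_bool (y = y0)"

lemma adj_op_delta_diff:
  assumes y0: "y0 \<in> blocks - {\<one>\<^bsub>D\<^esub>}"
  shows "delta_diff y0 \<one>\<^bsub>D\<^esub> = 1"
    and "A (delta_diff y0) \<one>\<^bsub>D\<^esub> = 0"
    and "A (A (delta_diff y0)) \<one>\<^bsub>D\<^esub> = real k1 - real (common_in False \<one>\<^bsub>D\<^esub> y0)"
    and "\<And>x. x \<in> C \<Longrightarrow> A (A (A (delta_diff y0))) x = (real k - real \<mu>) * A (delta_diff y0) x"
proof -
  have C: "\<one>\<^bsub>D\<^esub> \<in> C" "y0 \<in> C" and sides: "\<not> side \<one>\<^bsub>D\<^esub>" "\<not> side y0"
    using y0 one_in_blocks unfolding blocks_def by auto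
  have A_delta: "A (delta_diff y0) x = of_bool (adj x \<one>\<^bsub>D\<^esub>) - of_bool (adj x y0)" for x
    unfolding delta_diff_def adj_op_diff using adj_op_indicator[OF finite_C] C by simp
  show "delta_diff y0 \<one>\<^bsub>D\<^esub> = 1" using y0 by (auto simp: delta_diff_def)
  have "\<not> adj \<one>\<^bsub>D\<^esub> y0" using side_adj[OF one_closed, of y0] C sides by (auto simp: rotations_iff)
  then show "A (delta_diff y0) \<one>\<^bsub>D\<^esub> = 0"
    unfolding A_delta using adj_irrefl[OF one_closed] by simp
  have "A (A (delta_diff y0)) \<one>\<^bsub>D\<^esub>
      = (\<Sum>z\<in>C. of_bool (adj \<one>\<^bsub>D\<^esub> z) * (of_bool (adj z \<one>\<^bsub>D\<^esub>) - of_bool (adj z y0)))"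
    unfolding adj_op_of_bool[OF finite_C, of adj "A (delta_diff y0)"] A_delta ..
  also have "\<dots> = (\<Sum>z\<in>C. of_bool (adj \<one>\<^bsub>D\<^esub> z)) - (\<Sum>z\<in>C. of_bool (adj \<one>\<^bsub>D\<^esub> z \<and> adj z y0))"
    unfolding sum_subtractf[symmetric]
    by (rule sum.cong) (auto simp: rotations_iff adj_commute[OF one_closed])
  also have "\<dots> = real (card {z\<in>C. adj \<one>\<^bsub>D\<^esub> z}) - real (card {z\<in>C. adj \<one>\<^bsub>D\<^esub> z \<and> adj z y0})"
    using finite_C by (simp add: real_card_eq_sum_of_bool)
  finally have "A (A (delta_diff y0)) \<one>\<^bsub>D\<^esub>
      = real (card {z\<in>C. adj \<one>\<^bsub>D\<^esub> z}) - real (card {z\<in>C. adj \<one>\<^bsub>D\<^esub> z \<and> adj z y0})" .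
  then show "A (A (delta_diff y0)) \<one>\<^bsub>D\<^esub> = real k1 - real (common_in False \<one>\<^bsub>D\<^esub> y0)"
    using card_rotation_neighbours[OF C(1)] rotation_neighbours_sym[OF C(1)] by (simp add: common_in_False_eq)
  have "part_sum b (delta_diff y0) = 0" for b
    unfolding part_sum_def delta_diff_def sum_subtractf using finite_C C sides
    by (simp add: of_bool_def sum.delta)
  then show "\<And>x. x \<in> C \<Longrightarrow> A (A (A (delta_diff y0))) x = (real k - real \<mu>) * A (delta_diff y0) x"
    using adj_op_cube by simp
qed

lemma eigenvalue_square_root:
  assumes s: "s * s = real k - real \<mu>"
  shows "graph_eigenvalue C adj s"
proof -
  have "real k1 * real k1 \<noteq> real k1 + real k1 * (real m - 1)"
    using k1_pos_ne_m by (simp add: algebra_simps)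
  then obtain y0 where y0: "y0 \<in> blocks - {\<one>\<^bsub>D\<^esub>}" "real (common_in False \<one>\<^bsub>D\<^esub> y0) \<noteq> real k1"
    using exists_block_common_in_ne by blast
  let ?f = "delta_diff y0"
  show ?thesis
    unfolding graph_eigenvalue_iff_adj_op
  proof (intro exI[of _ "\<lambda>y. A (A ?f) y + s * A ?f y"] conjI ballI bexI[of _ "\<one>\<^bsub>D\<^esub>"])
    show "A (A ?f) \<one>\<^bsub>D\<^esub> + s * A ?f \<one>\<^bsub>D\<^esub> \<noteq> 0"
      using adj_op_delta_diff[OF y0(1)] y0(2) by simp
    show "\<one>\<^bsub>D\<^esub> \<in> C" using one_in_blocks unfolding blocks_def by simp
  next
    fix x assume "x \<in> C"
    then show "A (\<lambda>y. A (A ?f) y + s * A ?f y) x = s * (A (A ?f) x + s * A ?f x)"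
      using adj_op_eigenvector_of_cube[of C adj ?f s x] adj_op_delta_diff(4)[OF y0(1)] s by simp
  qed
qed

lemma eigenvalue_zero: "graph_eigenvalue C adj 0"
proof -
  have "real k1 * real k1 \<noteq> real k1 + (real k1 - (real k - real \<mu>)) * (real m - 1)"
  proof
    assume eq: "real k1 * real k1 = real k1 + (real k1 - (real k - real \<mu>)) * (real m - 1)"
    have "real k1 * real k1 + real k2 * real k2 = real k + real \<mu> * (real m - 1)"
      using sum_squares_k1_k2 m_pos
      by (metis (no_types, lifting) One_nat_def Suc_leI of_nat_1 of_nat_add of_nat_diff of_nat_mult)
    moreover have "real k = real k1 + real k2" using k_eq by simp
    ultimately have "real k2 * (real k2 - real m) = 0" using eq by (simp add: algebra_simps)
    then show False using k2_pos_ne_m by simp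
  qed
  then obtain y0 where y0: "y0 \<in> blocks - {\<one>\<^bsub>D\<^esub>}"
    "real (common_in False \<one>\<^bsub>D\<^esub> y0) \<noteq> real k1 - (real k - real \<mu>)"
    using exists_block_common_in_ne by blast
  let ?f = "delta_diff y0"
  show ?thesis
    unfolding graph_eigenvalue_iff_adj_op
  proof (intro exI[of _ "\<lambda>y. A (A ?f) y - (real k - real \<mu>) * ?f y"] conjI ballI bexI[of _ "\<one>\<^bsub>D\<^esub>"])
    show "A (A ?f) \<one>\<^bsub>D\<^esub> - (real k - real \<mu>) * ?f \<one>\<^bsub>D\<^esub> \<noteq> 0"
      using adj_op_delta_diff[OF y0(1)] y0(2) by simp
    show "\<one>\<^bsub>D\<^esub> \<in> C" using one_in_blocks unfolding blocks_def by simp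
  next
    fix x assume "x \<in> C"
    then show "A (\<lambda>y. A (A ?f) y - (real k - real \<mu>) * ?f y) x = 0 * (A (A ?f) x - (real k - real \<mu>) * ?f x)"
      using adj_op_kernel_of_cube[of C adj ?f "real k - real \<mu>" x] adj_op_delta_diff(4)[OF y0(1)] by simp
  qed
qed

lemma spectrum_C:
  "{lam. graph_eigenvalue C adj_C lam}
     = {real k1, - real k1, sqrt (real k - real \<mu>), - sqrt (real k - real \<mu>), 0}"
proof -
  have "sqrt (real k - real \<mu>) * sqrt (real k - real \<mu>) = real k - real \<mu>"
    using mu_less by simp
  then show ?thesis
    unfolding graph_eigenvalue_C
    using eigenvalue_cases eigenvalue_k1 eigenvalue_minus_k1 eigenvalue_zero
      eigenvalue_square_root[of "sqrt (real k - real \<mu>)"] eigenvalue_square_root[of "- sqrt (real k - real \<mu>)"]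
    by auto
qed

end

theorem proposition5p2:
  fixes n m k \<mu> :: nat and S :: "(nat \<times> bool) set"
  defines "G \<equiv> dihedral_group n"
  defines "C \<equiv> dihedral_rotations n"
  assumes "n = 2 * m" and "0 < m"
  assumes S_sub: "S \<subseteq> carrier G - {\<one>\<^bsub>G\<^esub>}"
    and S_inv: "\<forall>s\<in>S. inv\<^bsub>G\<^esub> s \<in> S"
  assumes drg: "distance_regular (carrier G) (cayley_adj G S) [k, k - 1, k - \<mu>] [1, \<mu>, k]"
    and "\<mu> < k - 1"
  assumes H_ne_C:
    "{g \<in> carrier G. even (graph_dist (carrier G) (cayley_adj G S) \<one>\<^bsub>G\<^esub> g)} \<noteq> C"
  shows "let k1 = card (S \<inter> C); k2 = k - k1 in
     (\<exists>\<alpha> \<beta> :: nat.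
        spgd_incidence_graph C (cayley_adj G (S \<inter> C)) m k1 \<alpha> \<beta> \<and>
        real \<alpha> = real \<mu> * (2 * real k1 - real k2) / 2 \<and>
        2 * int k1 - 1 + int \<beta> - int \<alpha> = (int k1 - int k2)^2 \<and>
        (int k1 - int k2)^2 = int k - int \<mu>) \<and>
     {lam. graph_eigenvalue C (cayley_adj G (S \<inter> C)) lam}
       = {real k1, - real k1, sqrt (real k - real \<mu>), - sqrt (real k - real \<mu>), 0}"
proof -
  interpret dihedral_drg n m k \<mu> S
    using assms unfolding G_def C_def by unfold_locales simp_all
  have "2 * int k1 - 1 + int beta - int alpha = (int k1 - int k2)^2"
    using int_beta square_k1_minus_k2 by simp
  then show ?thesis
    unfolding Let_def G_def C_def k1_def[symmetric] k2_def[symmetric]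
    using spgd_incidence_graph_C real_alpha square_k1_minus_k2 spectrum_C by blast
qed

end
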